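(* Let $m\le p<n$. Let $Q$ be an $n\times p$ matrix with $Q^*BQ=I_p$ of the form $$Q=[\,(X_m+X_m'G)L^{-1}\;\;V\,]\,U,$$ where: - $G$ is $(n-m)\times m$ with $\|G\|=\epsilon\le1/2$; - $V$ is $n\times(p-m)$; - $U$ is $p\times p$ unitary; - $L^{-1}=[(X_m+X_m'G)^*B(X_m+X_m'G)]^{-1/2}$. Then: (1) $\|L^{-1}-I_m\|\le\epsilon^2$, and $V=X_mS+X_m'HR$ for some $m\times(p-m)$ matrix $S$ with $\|S\|\le\epsilon$, some $(n-m)\times(p-m)$ matrix $H$ with $H^*H=I_{p-m}$, and some $(p-m)\times(p-m)$ matrix $R$ with $\|R-I_{p-m}\|\le\epsilon^2$. (2) $X^*BQ=\left(\begin{bmatrix}I_m&0\\0&H\end{bmatrix}+\Theta\right)U$, where $\Theta=\begin{bmatrix}\Theta_{11}&\Theta_{12}\\ \Theta_{21}&\Theta_{22}\end{bmatrix}$ with $\Theta_{11}$ of size $m\times m$ satisfies $\|\Theta_{11}\|,\|\Theta_{22}\|\le\epsilon^2$ and $\|\Theta_{12}\|,\|\Theta_{21}\|\le(1+\epsilon^2)\epsilon$. (3) For every real diagonal $n\times n$ matrix $D=\mathrm{diag}(D_m,D_m')$, with $D_m$ of size $m\times m$, $$(Q^*BX)D(X^*BQ)=U^*\left(\begin{bmatrix}D_m&0\\0&H^*D_m'H\end{bmatrix}+\Delta\right)U,\qquad \Delta=\begin{bmatrix}\Delta_{11}&\Delta_{12}\\ \Delta_{12}^*&\Delta_{22}\end{bmatrix},$$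 where $\Delta_{11}$ is $m\times m$, $\|\Delta_{11}\|,\|\Delta_{22}\|\le4\|D\|\epsilon^2$ and $\|\Delta_{12}\|\le4\|D\|\epsilon$.
   Context: Setup: - $A,B$ are Hermitian $n\times n$ matrices, $B$ positive definite, $B=C^*C$ with $C$ invertible. - $X=[x_1,\dots,x_n]$ satisfies $X^*BX=I$ (so $CX$ is unitary) and $AX=BX\Lambda$, with $\Lambda$ real diagonal. - $X_m=[x_1,\dots,x_m]$ and $X_m'=[x_{m+1},\dots,x_n]$. - $\|\cdot\|$ is the spectral norm; $(\cdot)^{-1/2}$ of a Hermitian positive definite matrix is the principal inverse square root. *)

theory Defs
  imports Complex_Main "Jordan_Normal_Form.Schur_Decomposition"
begin

definition hermitian_mat :: "complex mat \<Rightarrow> bool" where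
  "hermitian_mat M \<longleftrightarrow> square_mat M \<and> mat_adjoint M = M"

definition pos_def_mat :: "complex mat \<Rightarrow> bool" where
  "pos_def_mat M \<longleftrightarrow> hermitian_mat M \<and>
     (\<forall>x \<in> carrier_vec (dim_row M). x \<noteq> 0\<^sub>v (dim_row M) \<longrightarrow>
        Im ((M *\<^sub>v x) \<bullet>c x) = 0 \<and> Re ((M *\<^sub>v x) \<bullet>c x) > 0)"

definition unitary_mat :: "complex mat \<Rightarrow> bool" where
  "unitary_mat U \<longleftrightarrow> square_mat U \<and> mat_adjoint U * U = 1\<^sub>m (dim_row U)"

definition vec_norm2 :: "complex vec \<Rightarrow> real" where
  "vec_norm2 v = sqrt (\<Sum>i<dim_vec v. (cmod (v $ i))\<^sup>2)"

definition spec_norm :: "complex mat \<Rightarrow> real" where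
  "spec_norm M = Sup {vec_norm2 (M *\<^sub>v v) | v. v \<in> carrier_vec (dim_col M) \<and> vec_norm2 v \<le> 1}"

text \<open>Principal inverse square root of a Hermitian positive definite matrix W:
  the unique Hermitian positive definite M with M^2 = W^{-1}, i.e. M * M * W = I.\<close>
definition inv_sqrt_mat :: "complex mat \<Rightarrow> complex mat" where
  "inv_sqrt_mat W = (THE M. M \<in> carrier_mat (dim_row W) (dim_row W) \<and> pos_def_mat M \<and>
                           M * M * W = 1\<^sub>m (dim_row W))"

definition hcat :: "complex mat \<Rightarrow> complex mat \<Rightarrow> complex mat" where
  "hcat P V = mat (dim_row P) (dim_col P + dim_col V)
     (\<lambda>(i,j). if j < dim_col P then P $$ (i,j) else V $$ (i, j - dim_col P))"

definition cols_first :: "complex mat \<Rightarrow> nat \<Rightarrow> complex mat" where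
  "cols_first X m = mat (dim_row X) m (\<lambda>(i,j). X $$ (i,j))"

definition cols_rest :: "complex mat \<Rightarrow> nat \<Rightarrow> complex mat" where
  "cols_rest X m = mat (dim_row X) (dim_col X - m) (\<lambda>(i,j). X $$ (i, j + m))"

end

theory Submission
  imports Defs "HOL-Analysis.L2_Norm" "Jordan_Normal_Form.Spectral_Radius"
begin

text \<open>
  Since X^* B X = I, B-inner products become standard inner products in X-coordinates.
  There, X_m + X_m' G is the block column [I; G], so L^{-1} = (I + G^* G)^{-1/2}, whose eigenvalues
  lie in [(1 + \<epsilon>^2)^{-1/2}, 1]; hence \<parallel>L^{-1} - I\<parallel> \<le> \<epsilon>^2. Writing the coordinates of V as [S; T],
  B-orthonormality of the columns of Q says S = -G^* T and S^* S + T^* T = I. Thus \<parallel>T\<parallel> \<le> 1,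
  \<parallel>S\<parallel> \<le> \<epsilon>, and T^* T has its spectrum in [1 - \<epsilon>^2, 1], so the polar decomposition T = H R with
  R = (T^* T)^{1/2} satisfies \<parallel>R - I\<parallel> \<le> \<epsilon>^2. The coordinate matrix of Q is then
  [[L^{-1}, S], [G L^{-1}, H R]] U, and (2) and (3) follow by estimating its blocks and those of
  its congruence with the (block diagonal) matrix D.
\<close>

section \<open>Adjoints and block matrices\<close>

lemma conjugate_complex_eq_cnj[simp]: "conjugate (z::complex) = cnj z"
  by (simp add: conjugate_complex_def)

lemma dim_adjoint[simp]: "dim_row (mat_adjoint A) = dim_col A" "dim_col (mat_adjoint A) = dim_row A"
  by (auto simp: mat_adjoint_def)

lemma adjoint_carrier_mat[simp,intro]:
  "A \<in> carrier_mat n m \<Longrightarrow> mat_adjoint A \<in> carrier_mat m n"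
  unfolding carrier_mat_def by simp

lemma index_adjoint[simp]:
  "i < dim_col A \<Longrightarrow> j < dim_row A \<Longrightarrow> mat_adjoint A $$ (i,j) = cnj (A $$ (j,i))"
  by (simp add: mat_adjoint_def mat_of_rows_def)

lemma adjoint_adjoint[simp]: "mat_adjoint (mat_adjoint A) = (A :: complex mat)"
  by (rule eq_matI, simp_all)

lemma adjoint_mult: assumes "A \<in> carrier_mat n k" "B \<in> carrier_mat k m"
  shows "mat_adjoint (A * B) = mat_adjoint B * (mat_adjoint A :: complex mat)"
proof (rule eq_matI)
  fix i j assume ij: "i < dim_row (mat_adjoint B * mat_adjoint A)" "j < dim_col (mat_adjoint B * mat_adjoint A)"
  hence i: "i < m" and j: "j < n" using assms by auto
  have "mat_adjoint (A * B) $$ (i,j) = cnj (\<Sum>l<k. A $$ (j,l) * B $$ (l,i))"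
    using assms i j by (simp add: scalar_prod_def atLeast0LessThan)
  also have "\<dots> = (\<Sum>l<k. cnj (B $$ (l,i)) * cnj (A $$ (j,l)))"
    by (simp add: cnj_sum mult.commute)
  also have "\<dots> = (mat_adjoint B * mat_adjoint A) $$ (i,j)"
    using assms i j by (simp add: scalar_prod_def atLeast0LessThan)
  finally show "mat_adjoint (A * B) $$ (i,j) = (mat_adjoint B * mat_adjoint A) $$ (i,j)" .
qed (insert assms, auto)

lemma adjoint_mult':
  "dim_col A = dim_row B \<Longrightarrow>
    mat_adjoint (A * B) = mat_adjoint B * (mat_adjoint A :: complex mat)"
  by (rule adjoint_mult[of A "dim_row A" "dim_col A" B "dim_col B"]) auto

lemma adjoint_add: assumes "A \<in> carrier_mat n m" "B \<in> carrier_mat n m"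
  shows "mat_adjoint (A + B) = mat_adjoint A + (mat_adjoint B :: complex mat)"
  using assms by (intro eq_matI) auto

lemma adjoint_add': "dim_row A = dim_row B \<Longrightarrow> dim_col A = dim_col B \<Longrightarrow>
  mat_adjoint (A + B) = mat_adjoint A + (mat_adjoint B :: complex mat)"
  by (rule adjoint_add[of A "dim_row A" "dim_col A"]) auto

lemma adjoint_minus: assumes "A \<in> carrier_mat n m" "B \<in> carrier_mat n m"
  shows "mat_adjoint (A - B) = mat_adjoint A - (mat_adjoint B :: complex mat)"
  using assms by (intro eq_matI) auto

lemma adjoint_one[simp]: "mat_adjoint (1\<^sub>m n) = (1\<^sub>m n :: complex mat)"
  by (intro eq_matI) auto

lemma adjoint_zero[simp]: "mat_adjoint (0\<^sub>m n m) = (0\<^sub>m m n :: complex mat)"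
  by (intro eq_matI) auto

lemma adjoint_four_block_mat:
  fixes A B C D :: "complex mat"
    assumes "A \<in> carrier_mat r1 c1" "B \<in> carrier_mat r1 c2"
  "C \<in> carrier_mat r2 c1" "D \<in> carrier_mat r2 c2"
  shows "mat_adjoint (four_block_mat A B C D) =
    four_block_mat (mat_adjoint A) (mat_adjoint C) (mat_adjoint B) (mat_adjoint D)"
proof (rule eq_matI)
  fix i j assume "i < dim_row (four_block_mat (mat_adjoint A) (mat_adjoint C) (mat_adjoint B) (mat_adjoint D))"
    "j < dim_col (four_block_mat (mat_adjoint A) (mat_adjoint C) (mat_adjoint B) (mat_adjoint D))"
  hence i: "i < c1 + c2" and j: "j < r1 + r2" using assms by auto
  have "mat_adjoint (four_block_mat A B C D) $$ (i,j) = cnj (four_block_mat A B C D $$ (j,i))"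
    by (rule index_adjoint) (use assms i j in auto)
  thus "mat_adjoint (four_block_mat A B C D) $$ (i,j) =
    four_block_mat (mat_adjoint A) (mat_adjoint C) (mat_adjoint B) (mat_adjoint D) $$ (i,j)"
    using assms i j by auto
qed (use assms in auto)

lemma assoc_mult_mat':
  "dim_col A = dim_row B \<Longrightarrow> dim_col B = dim_row C \<Longrightarrow>
    A * B * C = A * (B * (C :: 'a :: semiring_0 mat))"
  by (rule assoc_mult_mat[of A "dim_row A" "dim_col A" B "dim_col B" C "dim_col C"]) auto

lemma assoc_mult_mat_vec':
  "dim_col A = dim_row B \<Longrightarrow> dim_col B = dim_vec v \<Longrightarrow>
    (A * B) *\<^sub>v v = A *\<^sub>v (B *\<^sub>v (v :: 'a :: semiring_0 vec))"
  by (rule assoc_mult_mat_vec[of A "dim_row A" "dim_col A" B "dim_col B"]) auto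

lemma mult_mat_vec_carrier_dim[simp]: "dim_row A = n \<Longrightarrow> A *\<^sub>v v \<in> carrier_vec n"
  by (rule carrier_vecI) simp

lemma mult_add_distrib_mat':
  "dim_col A = dim_row B \<Longrightarrow> dim_row B = dim_row C \<Longrightarrow>
    dim_col B = dim_col C \<Longrightarrow>
  A * (B + C) = A * B + A * (C :: 'a :: semiring_0 mat)"
  by (rule mult_add_distrib_mat[of A "dim_row A" "dim_col A" B "dim_col B"]) auto

lemma add_mult_distrib_mat':
  "dim_row A = dim_row B \<Longrightarrow> dim_col A = dim_col B \<Longrightarrow>
    dim_col A = dim_row C \<Longrightarrow>
  (A + B) * C = A * C + B * (C :: 'a :: semiring_0 mat)"
  by (rule add_mult_distrib_mat[of A "dim_row A" "dim_col A" B C "dim_col C"]) auto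

lemma mult_minus_distrib_mat':
  "dim_col A = dim_row B \<Longrightarrow> dim_row B = dim_row C \<Longrightarrow>
    dim_col B = dim_col C \<Longrightarrow>
  A * (B - C) = A * B - A * (C :: 'a :: ring mat)"
  by (rule mult_minus_distrib_mat[of A "dim_row A" "dim_col A" B "dim_col B"]) auto

lemma minus_mult_distrib_mat':
  "dim_row A = dim_row B \<Longrightarrow> dim_col A = dim_col B \<Longrightarrow>
    dim_col A = dim_row C \<Longrightarrow>
  (A - B) * C = A * C - B * (C :: 'a :: ring mat)"
  by (rule minus_mult_distrib_mat[of A "dim_row A" "dim_col A" B C "dim_col C"]) auto

lemma add_zero_mat_dims:
  "dim_row A = r \<Longrightarrow> dim_col A = c \<Longrightarrow>
    A + 0\<^sub>m r c = (A :: 'a :: monoid_add mat)"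
  by (intro eq_matI) auto

lemma zero_add_mat_dims:
  "dim_row A = r \<Longrightarrow> dim_col A = c \<Longrightarrow>
    0\<^sub>m r c + A = (A :: 'a :: monoid_add mat)"
  by (intro eq_matI) auto

lemma eq_uminus_of_add_eq_0_mat:
  assumes "A \<in> carrier_mat r c" "B \<in> carrier_mat r c" "A + B = 0\<^sub>m r c"
  shows "A = - (B :: 'a :: ab_group_add mat)"
proof (rule eq_matI)
  fix i j assume "i < dim_row (- B)" "j < dim_col (- B)"
  moreover have "(A + B) $$ (i, j) = 0\<^sub>m r c $$ (i, j)" using assms(3) by simp
  ultimately show "A $$ (i, j) = (- B) $$ (i, j)" using assms(1,2) by (simp add: eq_neg_iff_add_eq_0)
qed (use assms in auto)

lemma add_minus_cancel_mat: assumes "A \<in> carrier_mat r c" "B \<in> carrier_mat r c"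
  shows "B + (A - B) = (A :: complex mat)"
  using assms by (intro eq_matI) auto

lemma cscalar_prod_smult_left:
  "dim_vec v = dim_vec w \<Longrightarrow>
    (c \<cdot>\<^sub>v v) \<bullet>c w = c * (v \<bullet>c (w :: complex vec))"
  by (simp add: scalar_prod_def sum_distrib_left mult_ac)

lemma cscalar_prod_smult_right:
  "dim_vec v = dim_vec w \<Longrightarrow>
    v \<bullet>c (c \<cdot>\<^sub>v w) = cnj c * (v \<bullet>c (w :: complex vec))"
  by (simp add: scalar_prod_def sum_distrib_left mult_ac)

lemma cscalar_prod_add_left:
  "v \<in> carrier_vec n \<Longrightarrow> w \<in> carrier_vec n \<Longrightarrow>
    u \<in> carrier_vec n \<Longrightarrow>
  (v + w) \<bullet>c u = v \<bullet>c u + w \<bullet>c (u :: complex vec)"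
  by (simp add: scalar_prod_def sum.distrib algebra_simps)

lemma adjoint_cscalar_prod: assumes "A \<in> carrier_mat n m" "x \<in> carrier_vec m" "y \<in> carrier_vec n"
  shows "(A *\<^sub>v x) \<bullet>c y = x \<bullet>c (mat_adjoint A *\<^sub>v (y :: complex vec))"
proof -
  have "(A *\<^sub>v x) \<bullet>c y = (\<Sum>i<n. (\<Sum>j<m. A $$ (i,j) * x $ j) * cnj (y $ i))"
    using assms by (simp add: scalar_prod_def atLeast0LessThan)
  also have "\<dots> = (\<Sum>j<m. x $ j * cnj (\<Sum>i<n. cnj (A $$ (i,j)) * y $ i))"
    apply (simp add: sum_distrib_left sum_distrib_right cnj_sum)
    apply (subst sum.swap)
    apply (simp add: mult_ac)
    done
  also have "\<dots> = x \<bullet>c (mat_adjoint A *\<^sub>v y)"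
    using assms by (simp add: scalar_prod_def atLeast0LessThan)
  finally show ?thesis .
qed

section \<open>Euclidean norm and spectral norm\<close>

lemma vec_norm2_L2_set: "vec_norm2 v = L2_set (\<lambda>i. cmod (v $ i)) {..<dim_vec v}"
  by (simp add: vec_norm2_def L2_set_def)

lemma vec_norm2_nonneg[simp]: "0 \<le> vec_norm2 v"
  by (simp add: vec_norm2_L2_set)

lemma cscalar_prod_self: "v \<bullet>c v = complex_of_real ((vec_norm2 v)\<^sup>2)"
proof -
  have "v \<bullet>c v = (\<Sum>i<dim_vec v. v $ i * cnj (v $ i))"
    by (simp add: scalar_prod_def atLeast0LessThan)
  also have "\<dots> = (\<Sum>i<dim_vec v. complex_of_real ((cmod (v $ i))\<^sup>2))"
    by (rule sum.cong[OF refl], rule complex_norm_square[symmetric])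
  also have "\<dots> = complex_of_real ((vec_norm2 v)\<^sup>2)"
    by (simp add: vec_norm2_def sum_nonneg)
  finally show ?thesis .
qed

lemma vec_norm2_square: "(vec_norm2 v)\<^sup>2 = Re (v \<bullet>c v)"
  by (simp add: cscalar_prod_self)

lemma vec_norm2_eq_0_iff:
  assumes "v \<in> carrier_vec n"
    shows "vec_norm2 v = 0 \<longleftrightarrow> v = 0\<^sub>v n"
proof
  assume "vec_norm2 v = 0"
  hence "\<forall>i\<in>{..<dim_vec v}. cmod (v $ i) = 0" by (simp add: vec_norm2_L2_set L2_set_eq_0_iff)
  thus "v = 0\<^sub>v n" using assms by (intro eq_vecI) auto
next
  assume "v = 0\<^sub>v n" thus "vec_norm2 v = 0" by (simp add: vec_norm2_def)
qed

lemma vec_norm2_zero[simp]: "vec_norm2 (0\<^sub>v n) = 0"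
  by (simp add: vec_norm2_def)

lemma vec_norm2_eq_1: "v \<bullet>c v = 1 \<Longrightarrow> vec_norm2 v = 1"
  using vec_norm2_square[of v] vec_norm2_nonneg[of v] by (simp add: power2_eq_1_iff)

lemma vec_norm2_add_le: assumes "v \<in> carrier_vec n" "w \<in> carrier_vec n"
  shows "vec_norm2 (v + w) \<le> vec_norm2 v + vec_norm2 w"
proof -
  have "vec_norm2 (v + w) = L2_set (\<lambda>i. cmod (v $ i + w $ i)) {..<n}"
    using assms by (auto simp: vec_norm2_L2_set intro!: L2_set_cong)
  also have "\<dots> \<le> L2_set (\<lambda>i. cmod (v $ i) + cmod (w $ i)) {..<n}"
    by (rule L2_set_mono) (auto simp: norm_triangle_ineq)
  also have "\<dots> \<le> L2_set (\<lambda>i. cmod (v $ i)) {..<n} + L2_set (\<lambda>i. cmod (w $ i)) {..<n}"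
    by (rule L2_set_triangle_ineq)
  also have "\<dots> = vec_norm2 v + vec_norm2 w" using assms by (simp add: vec_norm2_L2_set carrier_vecD)
  finally show ?thesis .
qed

lemma vec_norm2_smult: "vec_norm2 (c \<cdot>\<^sub>v v) = cmod c * vec_norm2 v"
proof -
  have "vec_norm2 (c \<cdot>\<^sub>v v) = L2_set (\<lambda>i. cmod c * cmod (v $ i)) {..<dim_vec v}"
    by (auto simp: vec_norm2_L2_set norm_mult intro!: L2_set_cong)
  also have "\<dots> = cmod c * vec_norm2 v"
    by (simp add: vec_norm2_L2_set L2_set_right_distrib)
  finally show ?thesis .
qed

lemma vec_norm2_uminus: "vec_norm2 (- v) = vec_norm2 v"
  by (simp add: vec_norm2_def)

lemma cscalar_prod_le_vec_norm2: assumes "v \<in> carrier_vec n" "w \<in> carrier_vec n"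
  shows "cmod (v \<bullet>c w) \<le> vec_norm2 v * vec_norm2 w"
proof -
  have "cmod (v \<bullet>c w) = cmod (\<Sum>i<n. v $ i * cnj (w $ i))"
    using assms by (simp add: scalar_prod_def atLeast0LessThan)
  also have "\<dots> \<le> (\<Sum>i<n. cmod (v $ i * cnj (w $ i)))" by (rule norm_sum)
  also have "\<dots> = (\<Sum>i<n. \<bar>cmod (v $ i)\<bar> * \<bar>cmod (w $ i)\<bar>)" by (simp add: norm_mult)
  also have "\<dots> \<le> L2_set (\<lambda>i. cmod (v $ i)) {..<n} * L2_set (\<lambda>i. cmod (w $ i)) {..<n}"
    by (rule L2_set_mult_ineq)
  also have "\<dots> = vec_norm2 v * vec_norm2 w" using assms by (simp add: vec_norm2_L2_set carrier_vecD)
  finally show ?thesis .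
qed

lemma index_le_vec_norm2: assumes "j < dim_vec v" shows "cmod (v $ j) \<le> vec_norm2 v"
  unfolding vec_norm2_L2_set by (rule member_le_L2_set) (use assms in auto)

lemma vec_norm2_isometry: assumes U: "U \<in> carrier_mat n k" and UU: "mat_adjoint U * U = 1\<^sub>m k"
  and v: "v \<in> carrier_vec k"
  shows "vec_norm2 (U *\<^sub>v v) = vec_norm2 v"
proof -
  have "(U *\<^sub>v v) \<bullet>c (U *\<^sub>v v) = v \<bullet>c (mat_adjoint U *\<^sub>v (U *\<^sub>v v))"
    by (rule adjoint_cscalar_prod[OF U v]) (use U v in auto)
  also have "mat_adjoint U *\<^sub>v (U *\<^sub>v v) = (mat_adjoint U * U) *\<^sub>v v"
    by (rule assoc_mult_mat_vec[symmetric]) (use U v in auto)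
  also have "\<dots> = v" using UU v by simp
  finally have "(vec_norm2 (U *\<^sub>v v))\<^sup>2 = (vec_norm2 v)\<^sup>2" by (simp add: vec_norm2_square)
  thus ?thesis using vec_norm2_nonneg by (simp add: power2_eq_iff_nonneg)
qed

lemma vec_norm2_mult_mat_vec_bounded: assumes M: "M \<in> carrier_mat r c"
  shows "\<exists>K\<ge>0. \<forall>v \<in> carrier_vec c. vec_norm2 (M *\<^sub>v v) \<le> K * vec_norm2 v"
proof (intro exI[of _ "\<Sum>i<r. \<Sum>j<c. cmod (M $$ (i,j))"] conjI ballI)
  show "0 \<le> (\<Sum>i<r. \<Sum>j<c. cmod (M $$ (i,j)))" by (simp add: sum_nonneg)
  fix v :: "complex vec" assume v: "v \<in> carrier_vec c"
  have ent: "cmod ((M *\<^sub>v v) $ i) \<le> (\<Sum>j<c. cmod (M $$ (i,j))) * vec_norm2 v" if i: "i < r" for i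
  proof -
    have "cmod ((M *\<^sub>v v) $ i) = cmod (\<Sum>j<c. M $$ (i,j) * v $ j)"
      using M v i by (simp add: scalar_prod_def atLeast0LessThan)
    also have "\<dots> \<le> (\<Sum>j<c. cmod (M $$ (i,j)) * cmod (v $ j))"
      by (rule order_trans[OF norm_sum]) (simp add: norm_mult)
    also have "\<dots> \<le> (\<Sum>j<c. cmod (M $$ (i,j)) * vec_norm2 v)"
      using v by (intro sum_mono mult_left_mono index_le_vec_norm2) auto
    finally show ?thesis by (simp add: sum_distrib_right)
  qed
  have "vec_norm2 (M *\<^sub>v v) = L2_set (\<lambda>i. cmod ((M *\<^sub>v v) $ i)) {..<r}"
    using M by (simp add: vec_norm2_L2_set)
  also have "\<dots> \<le> (\<Sum>i<r. \<bar>cmod ((M *\<^sub>v v) $ i)\<bar>)"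
    by (rule L2_set_le_sum_abs)
  also have "\<dots> \<le> (\<Sum>i<r. (\<Sum>j<c. cmod (M $$ (i,j))) * vec_norm2 v)"
    using ent by (intro sum_mono) auto
  finally show "vec_norm2 (M *\<^sub>v v) \<le> (\<Sum>i<r. \<Sum>j<c. cmod (M $$ (i,j))) * vec_norm2 v"
    by (simp add: sum_distrib_right)
qed

lemma spec_norm_bdd_above: assumes M: "M \<in> carrier_mat r c"
  shows "bdd_above {vec_norm2 (M *\<^sub>v v) | v. v \<in> carrier_vec (dim_col M) \<and> vec_norm2 v \<le> 1}"
proof -
  obtain K where K: "K \<ge> 0" "\<forall>v \<in> carrier_vec c. vec_norm2 (M *\<^sub>v v) \<le> K * vec_norm2 v"
    using vec_norm2_mult_mat_vec_bounded[OF M] by blast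
  show ?thesis
  proof (rule bdd_aboveI[of _ K], clarify)
    fix v :: "complex vec" assume v: "v \<in> carrier_vec (dim_col M)" "vec_norm2 v \<le> 1"
    hence "vec_norm2 (M *\<^sub>v v) \<le> K * vec_norm2 v" using K M by auto
    also have "\<dots> \<le> K" using K v mult_left_mono[of "vec_norm2 v" 1 K] by auto
    finally show "vec_norm2 (M *\<^sub>v v) \<le> K" .
  qed
qed

lemma spec_norm_nonneg: assumes M: "M \<in> carrier_mat r c" shows "0 \<le> spec_norm M"
proof -
  have "vec_norm2 (M *\<^sub>v 0\<^sub>v c) \<le> spec_norm M"
    unfolding spec_norm_def
    by (rule cSup_upper[OF _ spec_norm_bdd_above[OF M]]) (use M in auto)
  moreover have "M *\<^sub>v 0\<^sub>v c = 0\<^sub>v r" using M by auto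
  ultimately show ?thesis by simp
qed

lemma vec_norm2_mult_le_spec_norm: assumes M: "M \<in> carrier_mat r c" and v: "v \<in> carrier_vec c"
  shows "vec_norm2 (M *\<^sub>v v) \<le> spec_norm M * vec_norm2 v"
proof (cases "vec_norm2 v = 0")
  case True
  hence "v = 0\<^sub>v c" using vec_norm2_eq_0_iff v by auto
  moreover have "M *\<^sub>v 0\<^sub>v c = 0\<^sub>v r" using M by auto
  ultimately show ?thesis using True by simp
next
  case False
  hence pos: "vec_norm2 v > 0" using vec_norm2_nonneg[of v] by linarith
  define w where "w = complex_of_real (1 / vec_norm2 v) \<cdot>\<^sub>v v"
  have w: "w \<in> carrier_vec c" "vec_norm2 w \<le> 1" using v pos by (auto simp: w_def vec_norm2_smult norm_divide)
  have "vec_norm2 (M *\<^sub>v w) \<le> spec_norm M"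
    unfolding spec_norm_def
    by (rule cSup_upper[OF _ spec_norm_bdd_above[OF M]]) (use M w in auto)
  moreover have "M *\<^sub>v w = complex_of_real (1 / vec_norm2 v) \<cdot>\<^sub>v (M *\<^sub>v v)"
    unfolding w_def using M v by (simp add: mult_mat_vec)
  ultimately have "vec_norm2 (M *\<^sub>v v) / vec_norm2 v \<le> spec_norm M"
    using pos by (simp add: vec_norm2_smult norm_divide)
  thus ?thesis using pos by (simp add: divide_le_eq mult.commute)
qed

lemma spec_norm_le: assumes M: "M \<in> carrier_mat r c" and K: "K \<ge> 0"
  and b: "\<And>v. v \<in> carrier_vec c \<Longrightarrow> vec_norm2 (M *\<^sub>v v) \<le> K * vec_norm2 v"
  shows "spec_norm M \<le> K"
  unfolding spec_norm_def
proof (rule cSup_least)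
  show "{vec_norm2 (M *\<^sub>v v) | v. v \<in> carrier_vec (dim_col M) \<and> vec_norm2 v \<le> 1} \<noteq> {}"
    using M by (auto intro!: exI[of _ "0\<^sub>v c"])
next
  fix x assume "x \<in> {vec_norm2 (M *\<^sub>v v) | v. v \<in> carrier_vec (dim_col M) \<and> vec_norm2 v \<le> 1}"
  then obtain v where v: "v \<in> carrier_vec c" "vec_norm2 v \<le> 1" and x: "x = vec_norm2 (M *\<^sub>v v)"
    using M by auto
  have "x \<le> K * vec_norm2 v" using b[OF v(1)] x by simp
  also have "\<dots> \<le> K" using K v mult_left_mono[of "vec_norm2 v" 1 K] by auto
  finally show "x \<le> K" .
qed

lemma spec_norm_mult_le: assumes A: "A \<in> carrier_mat r k" and B: "B \<in> carrier_mat k c"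
  shows "spec_norm (A * B) \<le> spec_norm A * spec_norm B"
proof (rule spec_norm_le[of _ r c])
  show "A * B \<in> carrier_mat r c" using A B by auto
  show "0 \<le> spec_norm A * spec_norm B" using spec_norm_nonneg[OF A] spec_norm_nonneg[OF B] by simp
  fix v :: "complex vec" assume v: "v \<in> carrier_vec c"
  have "vec_norm2 (A * B *\<^sub>v v) = vec_norm2 (A *\<^sub>v (B *\<^sub>v v))" using A B v by simp
  also have "\<dots> \<le> spec_norm A * vec_norm2 (B *\<^sub>v v)" by (rule vec_norm2_mult_le_spec_norm[OF A]) (use B v in auto)
  also have "\<dots> \<le> spec_norm A * (spec_norm B * vec_norm2 v)"
    by (rule mult_left_mono[OF vec_norm2_mult_le_spec_norm[OF B v] spec_norm_nonneg[OF A]])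
  finally show "vec_norm2 (A * B *\<^sub>v v) \<le> spec_norm A * spec_norm B * vec_norm2 v" by (simp add: mult.assoc)
qed

lemma spec_norm_mult_le': assumes A: "A \<in> carrier_mat r k" and B: "B \<in> carrier_mat k c"
  and a: "spec_norm A \<le> a" and b: "spec_norm B \<le> b"
  shows "spec_norm (A * B) \<le> a * b"
proof -
  have "spec_norm (A * B) \<le> spec_norm A * spec_norm B" by (rule spec_norm_mult_le[OF A B])
  also have "\<dots> \<le> a * b" using a b spec_norm_nonneg[OF A] spec_norm_nonneg[OF B] by (intro mult_mono) auto
  finally show ?thesis .
qed

lemma spec_norm_add_le: assumes A: "A \<in> carrier_mat r c" and B: "B \<in> carrier_mat r c"
  shows "spec_norm (A + B) \<le> spec_norm A + spec_norm B"
proof (rule spec_norm_le[of _ r c])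
  show "A + B \<in> carrier_mat r c" using A B by auto
  show "0 \<le> spec_norm A + spec_norm B" using spec_norm_nonneg[OF A] spec_norm_nonneg[OF B] by simp
  fix v :: "complex vec" assume v: "v \<in> carrier_vec c"
  have "vec_norm2 ((A + B) *\<^sub>v v) = vec_norm2 (A *\<^sub>v v + B *\<^sub>v v)"
    using A B v by (simp add: add_mult_distrib_mat_vec)
  also have "\<dots> \<le> vec_norm2 (A *\<^sub>v v) + vec_norm2 (B *\<^sub>v v)" by (rule vec_norm2_add_le[of _ r]) (use A B v in auto)
  also have "\<dots> \<le> spec_norm A * vec_norm2 v + spec_norm B * vec_norm2 v"
    using vec_norm2_mult_le_spec_norm[OF A v] vec_norm2_mult_le_spec_norm[OF B v] by simp
  finally show "vec_norm2 ((A + B) *\<^sub>v v) \<le> (spec_norm A + spec_norm B) * vec_norm2 v" by (simp add: algebra_simps)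
qed

lemma spec_norm_uminus_le:
  assumes A: "A \<in> carrier_mat r c" shows "spec_norm (- A) \<le> spec_norm A"
proof (rule spec_norm_le[OF uminus_carrier_mat[OF A] spec_norm_nonneg[OF A]])
  fix v :: "complex vec" assume v: "v \<in> carrier_vec c"
  have "(- A) *\<^sub>v v = - (A *\<^sub>v v)" using A v by (intro eq_vecI) auto
  thus "vec_norm2 (- A *\<^sub>v v) \<le> spec_norm A * vec_norm2 v"
    using vec_norm2_mult_le_spec_norm[OF A v] by (simp add: vec_norm2_uminus)
qed

lemma spec_norm_adjoint_le: assumes A: "A \<in> carrier_mat r c"
  shows "spec_norm (mat_adjoint A) \<le> spec_norm A"
proof (rule spec_norm_le[of _ c r])
  show "mat_adjoint A \<in> carrier_mat c r" using A by auto
  show "0 \<le> spec_norm A" by (rule spec_norm_nonneg[OF A])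
  fix v :: "complex vec" assume v: "v \<in> carrier_vec r"
  define w where "w = mat_adjoint A *\<^sub>v v"
  have w: "w \<in> carrier_vec c" unfolding w_def using A v by auto
  have "(vec_norm2 w)\<^sup>2 = Re (w \<bullet>c w)" by (rule vec_norm2_square)
  also have "w \<bullet>c w = (A *\<^sub>v w) \<bullet>c v" unfolding w_def by (rule adjoint_cscalar_prod[symmetric, OF A]) (use A v in auto)
  also have "Re \<dots> \<le> cmod \<dots>" by (rule complex_Re_le_cmod)
  also have "\<dots> \<le> vec_norm2 (A *\<^sub>v w) * vec_norm2 v" by (rule cscalar_prod_le_vec_norm2) (use A w v in auto)
  also have "\<dots> \<le> spec_norm A * vec_norm2 w * vec_norm2 v"
    by (rule mult_right_mono[OF vec_norm2_mult_le_spec_norm[OF A w]]) simp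
  finally have *: "(vec_norm2 w)\<^sup>2 \<le> spec_norm A * vec_norm2 w * vec_norm2 v" .
  show "vec_norm2 (mat_adjoint A *\<^sub>v v) \<le> spec_norm A * vec_norm2 v"
  proof (cases "vec_norm2 w = 0")
    case True thus ?thesis using spec_norm_nonneg[OF A] w_def by simp
  next
    case False
    hence "vec_norm2 w > 0" using vec_norm2_nonneg[of w] by linarith
    with * have "vec_norm2 w \<le> spec_norm A * vec_norm2 v"
      by (simp add: power2_eq_square mult.commute mult.left_commute)
    thus ?thesis unfolding w_def .
  qed
qed

lemma spec_norm_isometry_mult_le:
  assumes H: "H \<in> carrier_mat n k"
    and HH: "mat_adjoint H * H = 1\<^sub>m k"
  and M: "M \<in> carrier_mat k c"
  shows "spec_norm (H * M) \<le> spec_norm M"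
proof (rule spec_norm_le[of _ n c])
  show "H * M \<in> carrier_mat n c" using H M by auto
  show "0 \<le> spec_norm M" by (rule spec_norm_nonneg[OF M])
  fix v :: "complex vec" assume v: "v \<in> carrier_vec c"
  have "vec_norm2 (H * M *\<^sub>v v) = vec_norm2 (H *\<^sub>v (M *\<^sub>v v))" using H M v by simp
  also have "\<dots> = vec_norm2 (M *\<^sub>v v)" by (rule vec_norm2_isometry[OF H HH]) (use M v in auto)
  finally show "vec_norm2 (H * M *\<^sub>v v) \<le> spec_norm M * vec_norm2 v" using vec_norm2_mult_le_spec_norm[OF M v] by simp
qed

lemma spec_norm_isometry_le_1: assumes H: "H \<in> carrier_mat n k" and HH: "mat_adjoint H * H = 1\<^sub>m k"
  shows "spec_norm H \<le> 1"
  by (rule spec_norm_le[OF H]) (use vec_norm2_isometry[OF H HH] in auto)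

lemma spec_norm_adjoint_isometry_le_1:
  assumes H: "H \<in> carrier_mat n k"
    and HH: "mat_adjoint H * H = 1\<^sub>m k"
  shows "spec_norm (mat_adjoint H) \<le> 1"
  using spec_norm_adjoint_le[OF H] spec_norm_isometry_le_1[OF H HH] by linarith

lemma spec_norm_sandwich_minus_le:
  assumes L: "L \<in> carrier_mat k k" and A: "A \<in> carrier_mat k k"
    and Ln: "spec_norm L \<le> 1" and L1: "spec_norm (L - 1\<^sub>m k) \<le> \<delta>" and An: "spec_norm A \<le> a"
  shows "spec_norm (L * A * L - A) \<le> 2 * a * \<delta>"
proof -
  have L1c: "L - 1\<^sub>m k \<in> carrier_mat k k" by (rule minus_carrier_mat[OF one_carrier_mat])
  have "(L - 1\<^sub>m k) * (A * L) + A * (L - 1\<^sub>m k) = (L * (A * L) - A * L) + (A * L - A)"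
    using L A by (simp add: mult_minus_distrib_mat' minus_mult_distrib_mat')
  also have "\<dots> = L * A * L - A"
    unfolding assoc_mult_mat[OF L A L] using L A by (intro eq_matI) simp_all
  finally have "spec_norm (L * A * L - A) \<le>
      spec_norm ((L - 1\<^sub>m k) * (A * L)) + spec_norm (A * (L - 1\<^sub>m k))"
    using spec_norm_add_le[of "(L - 1\<^sub>m k) * (A * L)" k k "A * (L - 1\<^sub>m k)"] L A L1c by auto
  also have "\<dots> \<le> \<delta> * (a * 1) + a * \<delta>"
    using spec_norm_mult_le'[OF L1c mult_carrier_mat[OF A L] L1 spec_norm_mult_le'[OF A L An Ln]]
      spec_norm_mult_le'[OF A L1c An L1] A L by (intro add_mono) auto
  finally show ?thesis by (simp add: mult.commute)
qed

lemma spec_norm_congruence_le: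
  assumes E: "E \<in> carrier_mat n k" "spec_norm E \<le> 1" and D: "D \<in> carrier_mat n n"
  shows "spec_norm (mat_adjoint E * D * E) \<le> spec_norm D"
proof -
  have "spec_norm (mat_adjoint E * D) \<le> 1 * spec_norm D"
    by (rule spec_norm_mult_le'[OF adjoint_carrier_mat[OF E(1)] D]) (use spec_norm_adjoint_le[OF E(1)] E in auto)
  from spec_norm_mult_le'[OF mult_carrier_mat[OF adjoint_carrier_mat[OF E(1)] D] E(1) this E(2)]
  show ?thesis by simp
qed

lemma gram_quadratic_form: assumes A: "A \<in> carrier_mat r c" and v: "v \<in> carrier_vec c"
  shows "((mat_adjoint A * A) *\<^sub>v v) \<bullet>c v = complex_of_real ((vec_norm2 (A *\<^sub>v v))\<^sup>2)"
proof -
  have "((mat_adjoint A * A) *\<^sub>v v) \<bullet>c v = (mat_adjoint A *\<^sub>v (A *\<^sub>v v)) \<bullet>c v"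
    using carrier_matD[OF A] carrier_vecD[OF v] by (simp add: assoc_mult_mat_vec')
  also have "\<dots> = (A *\<^sub>v v) \<bullet>c (mat_adjoint (mat_adjoint A) *\<^sub>v v)"
    by (rule adjoint_cscalar_prod) (use A v in auto)
  also have "\<dots> = complex_of_real ((vec_norm2 (A *\<^sub>v v))\<^sup>2)" by (simp add: cscalar_prod_self)
  finally show ?thesis .
qed

lemma vec_norm2_gram_sum:
  assumes S: "S \<in> carrier_mat m q" and T: "T \<in> carrier_mat k q"
    and ST: "mat_adjoint S * S + mat_adjoint T * T = 1\<^sub>m q" and v: "v \<in> carrier_vec q"
  shows "(vec_norm2 v)\<^sup>2 = (vec_norm2 (S *\<^sub>v v))\<^sup>2 + (vec_norm2 (T *\<^sub>v v))\<^sup>2"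
proof -
  have SS: "mat_adjoint S * S \<in> carrier_mat q q" and TT: "mat_adjoint T * T \<in> carrier_mat q q"
    using S T by auto
  have "complex_of_real ((vec_norm2 v)\<^sup>2) = ((mat_adjoint S * S + mat_adjoint T * T) *\<^sub>v v) \<bullet>c v"
    using ST v by (simp add: cscalar_prod_self)
  also have "\<dots> = ((mat_adjoint S * S) *\<^sub>v v) \<bullet>c v + ((mat_adjoint T * T) *\<^sub>v v) \<bullet>c v"
    unfolding add_mult_distrib_mat_vec[OF SS TT v] by (rule cscalar_prod_add_left[of _ q]) (use SS TT v in auto)
  also have "\<dots> = complex_of_real ((vec_norm2 (S *\<^sub>v v))\<^sup>2 + (vec_norm2 (T *\<^sub>v v))\<^sup>2)"
    using gram_quadratic_form[OF S v] gram_quadratic_form[OF T v] by simp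
  finally show ?thesis by (simp only: of_real_eq_iff)
qed

lemma spec_norm_le_1_of_gram_sum:
  assumes S: "S \<in> carrier_mat m q" and T: "T \<in> carrier_mat k q"
    and ST: "mat_adjoint S * S + mat_adjoint T * T = 1\<^sub>m q"
  shows "spec_norm T \<le> 1"
proof (rule spec_norm_le[OF T])
  fix v :: "complex vec" assume v: "v \<in> carrier_vec q"
  have "(vec_norm2 (T *\<^sub>v v))\<^sup>2 \<le> (vec_norm2 v)\<^sup>2" using vec_norm2_gram_sum[OF S T ST v] by simp
  thus "vec_norm2 (T *\<^sub>v v) \<le> 1 * vec_norm2 v" by (simp add: power2_le_iff_abs_le)
qed simp

section \<open>The spectral theorem for Hermitian matrices\<close>

definition real_diag_mat :: "nat \<Rightarrow> (nat \<Rightarrow> real) \<Rightarrow> complex mat" where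
  "real_diag_mat n d = mat n n (\<lambda>(i,j). if i = j then complex_of_real (d i) else 0)"

lemma real_diag_mat_carrier[simp]: "real_diag_mat n d \<in> carrier_mat n n"
  by (simp add: real_diag_mat_def)

lemma dim_real_diag_mat[simp]: "dim_row (real_diag_mat n d) = n" "dim_col (real_diag_mat n d) = n"
  by (simp_all add: real_diag_mat_def)

lemma index_real_diag_mat[simp]:
  "i < n \<Longrightarrow> j < n \<Longrightarrow>
    real_diag_mat n d $$ (i,j) = (if i = j then complex_of_real (d i) else 0)"
  by (simp add: real_diag_mat_def)

lemma real_diag_mat_mult: "real_diag_mat n a * real_diag_mat n b = real_diag_mat n (\<lambda>i. a i * b i)"
proof (rule eq_matI)
  fix i j assume "i < dim_row (real_diag_mat n (\<lambda>i. a i * b i))" "j < dim_col (real_diag_mat n (\<lambda>i. a i * b i))"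
  hence i: "i < n" and j: "j < n" by auto
  have "(real_diag_mat n a * real_diag_mat n b) $$ (i,j) = (\<Sum>l<n. real_diag_mat n a $$ (i,l) * real_diag_mat n b $$ (l,j))"
    using i j by (simp add: scalar_prod_def atLeast0LessThan)
  also have "\<dots> = (\<Sum>l<n. if l = i then real_diag_mat n a $$ (i,l) * real_diag_mat n b $$ (l,j) else 0)"
    using i j by (intro sum.cong) auto
  also have "\<dots> = real_diag_mat n (\<lambda>i. a i * b i) $$ (i,j)" using i j by (simp add: sum.delta)
  finally show "(real_diag_mat n a * real_diag_mat n b) $$ (i,j) = real_diag_mat n (\<lambda>i. a i * b i) $$ (i,j)" .
qed auto

lemma real_diag_mat_mult':
  "dim_row X = n \<Longrightarrow> real_diag_mat n a * (real_diag_mat n b * X) = real_diag_mat n (\<lambda>i. a i * b i) * X"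
  by (simp add: assoc_mult_mat'[symmetric] real_diag_mat_mult)

lemma adjoint_real_diag_mat[simp]: "mat_adjoint (real_diag_mat n d) = real_diag_mat n d"
  by (rule eq_matI) auto

lemma real_diag_mat_one: "real_diag_mat n (\<lambda>_. 1) = 1\<^sub>m n"
  by (rule eq_matI) auto

lemma real_diag_mat_minus: "real_diag_mat n a - real_diag_mat n b = real_diag_mat n (\<lambda>i. a i - b i)"
  by (rule eq_matI) auto

lemma real_diag_mat_zero: "real_diag_mat n (\<lambda>_. 0) = 0\<^sub>m n n"
  by (rule eq_matI) auto

lemma index_real_diag_mat_mult_vec: assumes "v \<in> carrier_vec n" "i < n"
  shows "(real_diag_mat n d *\<^sub>v v) $ i = complex_of_real (d i) * v $ i"
proof -
  have "(real_diag_mat n d *\<^sub>v v) $ i = (\<Sum>j<n. real_diag_mat n d $$ (i,j) * v $ j)"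
    using assms by (simp add: scalar_prod_def atLeast0LessThan)
  also have "\<dots> = (\<Sum>j<n. (if j = i then complex_of_real (d i) * v $ j else 0))"
    using assms by (intro sum.cong) auto
  also have "\<dots> = complex_of_real (d i) * v $ i" using assms by (simp add: sum.delta)
  finally show ?thesis .
qed

lemma vec_norm2_real_diag_mat_le:
  assumes d: "\<And>i. i < n \<Longrightarrow> \<bar>d i\<bar> \<le> c"
    and c: "c \<ge> 0"
  and v: "v \<in> carrier_vec n"
  shows "vec_norm2 (real_diag_mat n d *\<^sub>v v) \<le> c * vec_norm2 v"
proof -
  have e: "(real_diag_mat n d *\<^sub>v v) $ i = complex_of_real (d i) * v $ i" if "i < n" for i
  proof -
    have "(real_diag_mat n d *\<^sub>v v) $ i = (\<Sum>j<n. real_diag_mat n d $$ (i,j) * v $ j)"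
      using that v by (simp add: scalar_prod_def atLeast0LessThan)
    also have "\<dots> = (\<Sum>j<n. (if j = i then complex_of_real (d i) * v $ j else 0))"
      using that by (intro sum.cong) auto
    also have "\<dots> = complex_of_real (d i) * v $ i" using that by (simp add: sum.delta)
    finally show ?thesis .
  qed
  have "vec_norm2 (real_diag_mat n d *\<^sub>v v) = L2_set (\<lambda>i. cmod ((real_diag_mat n d *\<^sub>v v) $ i)) {..<n}"
    by (simp add: vec_norm2_L2_set)
  also have "\<dots> = L2_set (\<lambda>i. \<bar>d i\<bar> * cmod (v $ i)) {..<n}"
  proof (rule L2_set_cong)
    fix i assume "i \<in> {..<n}"
    hence "cmod ((real_diag_mat n d *\<^sub>v v) $ i) = cmod (complex_of_real (d i) * v $ i)" using e by simp
    thus "cmod ((real_diag_mat n d *\<^sub>v v) $ i) = \<bar>d i\<bar> * cmod (v $ i)" by (simp add: norm_mult)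
  qed simp
  also have "\<dots> \<le> L2_set (\<lambda>i. c * cmod (v $ i)) {..<n}"
    using d by (intro L2_set_mono mult_right_mono) auto
  also have "\<dots> = c * vec_norm2 v" using v c by (simp add: vec_norm2_L2_set L2_set_right_distrib)
  finally show ?thesis .
qed

definition unitary_of :: "complex mat \<Rightarrow> nat \<Rightarrow> bool" where
  "unitary_of U n \<longleftrightarrow> U \<in> carrier_mat n n \<and> mat_adjoint U * U = 1\<^sub>m n \<and> U * mat_adjoint U = 1\<^sub>m n"

lemma unitary_ofI:
  assumes "U \<in> carrier_mat n n" "mat_adjoint U * U = 1\<^sub>m n"
  shows "unitary_of U n"
  using mat_mult_left_right_inverse[OF adjoint_carrier_mat[OF assms(1)] assms(1,2)] assms
  unfolding unitary_of_def by auto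

lemma unitary_of_mult:
  assumes "unitary_of U n" "unitary_of V n"
  shows "unitary_of (U * V) n"
proof (rule unitary_ofI)
  have U: "U \<in> carrier_mat n n" "mat_adjoint U * U = 1\<^sub>m n"
    and V: "V \<in> carrier_mat n n" "mat_adjoint V * V = 1\<^sub>m n" using assms by (auto simp: unitary_of_def)
  show "U * V \<in> carrier_mat n n" using U V by auto
  have "mat_adjoint (U * V) * (U * V) = mat_adjoint V * (mat_adjoint U * U) * V"
    using U(1) V(1) by (simp add: adjoint_mult' assoc_mult_mat')
  also have "\<dots> = 1\<^sub>m n" using U V by simp
  finally show "mat_adjoint (U * V) * (U * V) = 1\<^sub>m n" .
qed

definition spectral_mat :: "complex mat \<Rightarrow> nat \<Rightarrow> (nat \<Rightarrow> real) \<Rightarrow> complex mat" where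
  "spectral_mat U n d = U * real_diag_mat n d * mat_adjoint U"

lemma spectral_mat_carrier[simp]: "unitary_of U n \<Longrightarrow> spectral_mat U n d \<in> carrier_mat n n"
  unfolding unitary_of_def spectral_mat_def by auto

definition normalize_vec :: "complex vec \<Rightarrow> complex vec" where
  "normalize_vec w = complex_of_real (1 / vec_norm2 w) \<cdot>\<^sub>v w"

lemma vec_norm2_normalize_vec:
  "w \<noteq> 0\<^sub>v (dim_vec w) \<Longrightarrow> vec_norm2 (normalize_vec w) = 1"
  using vec_norm2_eq_0_iff[of w "dim_vec w"] vec_norm2_nonneg[of w]
  by (simp add: normalize_vec_def vec_norm2_smult norm_divide)

lemma orthonormal_mat_of_cols_normalize:
  assumes orth: "corthogonal ws" and ws: "set ws \<subseteq> carrier_vec n" "length ws = k"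
  shows "mat_adjoint (mat_of_cols n (map normalize_vec ws)) * mat_of_cols n (map normalize_vec ws) = 1\<^sub>m k"
proof (rule eq_matI)
  define W where "W = mat_of_cols n (map normalize_vec ws)"
  fix i j assume "i < dim_row (1\<^sub>m k :: complex mat)" "j < dim_col (1\<^sub>m k :: complex mat)"
  hence i: "i < k" and j: "j < k" by auto
  have wsi: "ws ! i \<in> carrier_vec n" if "i < k" for i using ws that by auto
  have nz: "vec_norm2 (ws ! i) > 0" if "i < k" for i
  proof -
    have "ws ! i \<bullet>c ws ! i \<noteq> 0" using corthogonalD[OF orth, of i i] that ws by auto
    hence "vec_norm2 (ws ! i) \<noteq> 0" by (auto simp: cscalar_prod_self)
    thus ?thesis using vec_norm2_nonneg[of "ws ! i"] by linarith
  qed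
  have "(mat_adjoint W * W) $$ (i,j) = (\<Sum>l<n. cnj (W $$ (l,i)) * W $$ (l,j))"
    using ws i j by (simp add: W_def scalar_prod_def atLeast0LessThan)
  also have "\<dots> = complex_of_real (1 / vec_norm2 (ws ! i)) * complex_of_real (1 / vec_norm2 (ws ! j))
       * (ws ! j \<bullet>c ws ! i)"
    using ws i j wsi[of i] wsi[of j]
    by (simp add: W_def normalize_vec_def mat_of_cols_index scalar_prod_def atLeast0LessThan
        sum_distrib_left mult_ac)
  also have "\<dots> = 1\<^sub>m k $$ (i,j)"
  proof (cases "i = j")
    case True
    thus ?thesis using cscalar_prod_self[of "ws ! i"] nz[OF i] i by (simp add: power2_eq_square)
  next
    case False
    thus ?thesis using corthogonalD[OF orth, of j i] i j ws by simp
  qed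
  finally show "(mat_adjoint W * W) $$ (i,j) = 1\<^sub>m k $$ (i,j)" unfolding W_def .
qed (use ws in auto)

lemma orthonormal_completion:
  assumes v: "v \<in> carrier_vec n" and v1: "v \<bullet>c v = 1" and n: "n > 0"
  obtains W where "unitary_of W n" "col W 0 = v"
proof -
  interpret cof_vec_space n "TYPE(complex)" .
  have v0: "v \<noteq> 0\<^sub>v n" using v1 v by auto
  define b where "b = basis_completion v"
  from basis_completion[OF v v0, folded b_def]
  have dist_b: "distinct b" and indep: "\<not> lin_dep (set b)" and bc: "set b \<subseteq> carrier_vec n"
    and hdb: "hd b = v" and len_b: "length b = n" by auto
  from hdb len_b n obtain vs where bv: "b = v # vs" by (cases b, auto)
  define ws where "ws = gram_schmidt n b"
  from gram_schmidt_result[OF bc dist_b indep ws_def]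
  have orth: "corthogonal ws" and wsc: "set ws \<subseteq> carrier_vec n" and lenw: "length ws = n"
    by (auto simp: len_b)
  have "hd ws = v" unfolding ws_def bv by (rule gram_schmidt_hd[OF v])
  hence ws0: "ws ! 0 = v" using hd_conv_nth[of ws] lenw n by auto
  define W where "W = mat_of_cols n (map normalize_vec ws)"
  have W: "W \<in> carrier_mat n n" unfolding W_def using lenw by auto
  have "col W 0 = normalize_vec (ws ! 0)"
    unfolding W_def using n lenw wsc by (subst col_mat_of_cols) (auto simp: normalize_vec_def)
  also have "ws ! 0 = v" by (rule ws0)
  also have "normalize_vec v = v"
    using vec_norm2_eq_1[OF v1] unfolding normalize_vec_def by simp
  finally show ?thesis
    by (rule that[OF unitary_ofI[OF W orthonormal_mat_of_cols_normalize[OF orth wsc lenw, folded W_def]]])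
qed

lemma unit_eigenvector_exists:
  fixes A :: "complex mat"
  assumes A: "A \<in> carrier_mat n n" and n: "n > 0"
  obtains e v where "v \<in> carrier_vec n" "v \<bullet>c v = 1" "A *\<^sub>v v = e \<cdot>\<^sub>v v"
proof -
  have "spectrum A \<noteq> {}" by (rule spectrum_non_empty[OF A n])
  then obtain e v0 where "eigenvector A v0 e" unfolding spectrum_def eigenvalue_def by auto
  hence v0: "v0 \<in> carrier_vec n" "v0 \<noteq> 0\<^sub>v n" "A *\<^sub>v v0 = e \<cdot>\<^sub>v v0"
    using A unfolding eigenvector_def by auto
  have "vec_norm2 (normalize_vec v0) = 1" using v0 by (intro vec_norm2_normalize_vec) auto
  moreover have "A *\<^sub>v normalize_vec v0 = e \<cdot>\<^sub>v normalize_vec v0"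
    unfolding normalize_vec_def using A v0 by (simp add: mult_mat_vec smult_smult_assoc mult.commute)
  ultimately show ?thesis using v0 by (intro that[of "normalize_vec v0"]) (auto simp: normalize_vec_def cscalar_prod_self)
qed

lemma hermitian_first_column_split:
  assumes A: "A \<in> carrier_mat (Suc k) (Suc k)" "mat_adjoint A = A"
    and col0: "col A 0 = e \<cdot>\<^sub>v unit_vec (Suc k) 0"
  obtains A3 where "A3 \<in> carrier_mat k k" "mat_adjoint A3 = A3"
    "A = four_block_mat (real_diag_mat 1 (\<lambda>_. Re e)) (0\<^sub>m 1 k) (0\<^sub>m k 1) A3"
proof -
  have Ai0: "A $$ (i,0) = (if i = 0 then e else 0)" if "i < Suc k" for i
    using arg_cong[OF col0, of "\<lambda>v. v $ i"] that A by simp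
  have A0j: "A $$ (0,j) = (if j = 0 then cnj e else 0)" if "j < Suc k" for j
  proof -
    have "A $$ (0,j) = mat_adjoint A $$ (0,j)" using A(2) by simp
    also have "\<dots> = cnj (A $$ (j,0))" using that A(1) by simp
    finally show ?thesis using Ai0[OF that] by simp
  qed
  have e: "cnj e = complex_of_real (Re e)"
    using Ai0[of 0] A0j[of 0] by (metis Reals_cnj_iff complex_is_Real_iff of_real_Re zero_less_Suc)
  define A3 where "A3 = mat k k (\<lambda>(i,j). A $$ (Suc i, Suc j))"
  show ?thesis
  proof (rule that)
    show A3: "A3 \<in> carrier_mat k k" unfolding A3_def by simp
    show "mat_adjoint A3 = A3"
    proof (rule eq_matI)
      fix i j assume "i < dim_row A3" "j < dim_col A3"
      hence i: "i < k" and j: "j < k" using A3 by auto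
      have "mat_adjoint A3 $$ (i,j) = mat_adjoint A $$ (Suc i, Suc j)" using i j A(1) by (simp add: A3_def)
      thus "mat_adjoint A3 $$ (i,j) = A3 $$ (i,j)" using A(2) i j by (simp add: A3_def)
    qed (use A3 in auto)
    show "A = four_block_mat (real_diag_mat 1 (\<lambda>_. Re e)) (0\<^sub>m 1 k) (0\<^sub>m k 1) A3"
    proof (rule eq_matI)
      fix i j assume "i < dim_row (four_block_mat (real_diag_mat 1 (\<lambda>_. Re e)) (0\<^sub>m 1 k) (0\<^sub>m k 1) A3)"
        "j < dim_col (four_block_mat (real_diag_mat 1 (\<lambda>_. Re e)) (0\<^sub>m 1 k) (0\<^sub>m k 1) A3)"
      hence i: "i < Suc k" and j: "j < Suc k" using A3 by auto
      show "A $$ (i,j) = four_block_mat (real_diag_mat 1 (\<lambda>_. Re e)) (0\<^sub>m 1 k) (0\<^sub>m k 1) A3 $$ (i,j)"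
        using A0j[OF j] Ai0[OF i] e i j A3 by (cases i; cases j) (auto simp: A3_def)
    qed (use A A3 in auto)
  qed
qed

lemma col_unitary_congruence:
  assumes W: "unitary_of W n" and i: "i < n" and A: "A \<in> carrier_mat n n"
    and Av: "A *\<^sub>v col W i = e \<cdot>\<^sub>v col W i"
  shows "col (mat_adjoint W * A * W) i = e \<cdot>\<^sub>v unit_vec n i"
proof -
  have Wc: "W \<in> carrier_mat n n" and WW: "mat_adjoint W * W = 1\<^sub>m n" using W by (auto simp: unitary_of_def)
  have "col (mat_adjoint W * A * W) i = (mat_adjoint W * A) *\<^sub>v col W i"
    by (rule col_mult2) (use Wc A i in auto)
  also have "\<dots> = mat_adjoint W *\<^sub>v (A *\<^sub>v col W i)"
    by (rule assoc_mult_mat_vec) (use Wc A i in auto)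
  also have "\<dots> = e \<cdot>\<^sub>v (mat_adjoint W *\<^sub>v col W i)" unfolding Av by (rule mult_mat_vec) (use Wc i in auto)
  also have "mat_adjoint W *\<^sub>v col W i = col (mat_adjoint W * W) i"
    by (rule col_mult2[symmetric]) (use Wc i in auto)
  finally show ?thesis using WW i by simp
qed

lemma unitary_of_four_block_one:
  assumes U: "unitary_of U k"
  shows "unitary_of (four_block_mat (1\<^sub>m 1) (0\<^sub>m 1 k) (0\<^sub>m k 1) U) (Suc k)"
proof (rule unitary_ofI)
  have Uc: "U \<in> carrier_mat k k" and UU: "mat_adjoint U * U = 1\<^sub>m k" using U by (auto simp: unitary_of_def)
  show "four_block_mat (1\<^sub>m 1) (0\<^sub>m 1 k) (0\<^sub>m k 1) U \<in> carrier_mat (Suc k) (Suc k)" using Uc by auto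
  have "mat_adjoint (four_block_mat (1\<^sub>m 1) (0\<^sub>m 1 k) (0\<^sub>m k 1) U) * four_block_mat (1\<^sub>m 1) (0\<^sub>m 1 k) (0\<^sub>m k 1) U
      = four_block_mat (1\<^sub>m 1) (0\<^sub>m 1 k) (0\<^sub>m k 1) (mat_adjoint U * U)"
    unfolding adjoint_four_block_mat[OF one_carrier_mat zero_carrier_mat zero_carrier_mat Uc]
    by (subst mult_four_block_mat) (use Uc in auto)
  thus "mat_adjoint (four_block_mat (1\<^sub>m 1) (0\<^sub>m 1 k) (0\<^sub>m k 1) U) * four_block_mat (1\<^sub>m 1) (0\<^sub>m 1 k) (0\<^sub>m k 1) U
      = 1\<^sub>m (Suc k)" unfolding UU by simp
qed

lemma spectral_mat_four_block_one:
  assumes U: "unitary_of U k"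
  shows "spectral_mat (four_block_mat (1\<^sub>m 1) (0\<^sub>m 1 k) (0\<^sub>m k 1) U) (Suc k) (case_nat c d) =
    four_block_mat (real_diag_mat 1 (\<lambda>_. c)) (0\<^sub>m 1 k) (0\<^sub>m k 1) (spectral_mat U k d)"
proof -
  have Uc: "U \<in> carrier_mat k k" using U by (auto simp: unitary_of_def)
  have D: "real_diag_mat (Suc k) (case_nat c d) =
      four_block_mat (real_diag_mat 1 (\<lambda>_. c)) (0\<^sub>m 1 k) (0\<^sub>m k 1) (real_diag_mat k d)"
    by (rule eq_matI) (auto split: nat.split)
  have "four_block_mat (1\<^sub>m 1) (0\<^sub>m 1 k) (0\<^sub>m k 1) U * real_diag_mat (Suc k) (case_nat c d) =
      four_block_mat (real_diag_mat 1 (\<lambda>_. c)) (0\<^sub>m 1 k) (0\<^sub>m k 1) (U * real_diag_mat k d)"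
    unfolding D mult_four_block_mat[OF one_carrier_mat zero_carrier_mat zero_carrier_mat Uc
        real_diag_mat_carrier zero_carrier_mat zero_carrier_mat real_diag_mat_carrier]
    using Uc by simp
  moreover have "four_block_mat (real_diag_mat 1 (\<lambda>_. c)) (0\<^sub>m 1 k) (0\<^sub>m k 1) (U * real_diag_mat k d) *
      four_block_mat (1\<^sub>m 1) (0\<^sub>m 1 k) (0\<^sub>m k 1) (mat_adjoint U) =
      four_block_mat (real_diag_mat 1 (\<lambda>_. c)) (0\<^sub>m 1 k) (0\<^sub>m k 1) (U * real_diag_mat k d * mat_adjoint U)"
    using Uc by (subst mult_four_block_mat[OF real_diag_mat_carrier zero_carrier_mat zero_carrier_mat
          mult_carrier_mat[OF Uc real_diag_mat_carrier] one_carrier_mat zero_carrier_mat zero_carrier_mat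
          adjoint_carrier_mat[OF Uc]]) (simp add: zero_add_mat_dims carrier_matD[OF Uc])
  ultimately show ?thesis
    unfolding spectral_mat_def adjoint_four_block_mat[OF one_carrier_mat zero_carrier_mat zero_carrier_mat Uc]
    by simp
qed

lemma spectral_mat_unitary_congruence:
  assumes "unitary_of W n" "unitary_of V n"
  shows "W * spectral_mat V n d * mat_adjoint W = spectral_mat (W * V) n d"
proof -
  have "W \<in> carrier_mat n n" "V \<in> carrier_mat n n" using assms by (auto simp: unitary_of_def)
  thus ?thesis unfolding spectral_mat_def by (simp add: adjoint_mult' assoc_mult_mat')
qed

theorem hermitian_spectral_mat:
  assumes "A \<in> carrier_mat n n" "mat_adjoint A = A"
  shows "\<exists>U d. unitary_of U n \<and> A = spectral_mat U n d"
  using assms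
proof (induction n arbitrary: A)
  case 0
  show ?case
    by (intro exI[of _ "1\<^sub>m 0"] exI[of _ "\<lambda>_. 0"])
      (use 0 in \<open>auto simp: unitary_of_def spectral_mat_def intro!: eq_matI\<close>)
next
  case (Suc k)
  note A = Suc.prems
  obtain e v where v: "v \<in> carrier_vec (Suc k)" "v \<bullet>c v = 1" and Av: "A *\<^sub>v v = e \<cdot>\<^sub>v v"
    by (rule unit_eigenvector_exists[OF A(1) zero_less_Suc])
  obtain W where W: "unitary_of W (Suc k)" and Wv: "col W 0 = v"
    by (rule orthonormal_completion[OF v zero_less_Suc])
  have Wc: "W \<in> carrier_mat (Suc k) (Suc k)" and WW': "W * mat_adjoint W = 1\<^sub>m (Suc k)"
    using W by (auto simp: unitary_of_def)
  define A' where "A' = mat_adjoint W * A * W"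
  have A': "A' \<in> carrier_mat (Suc k) (Suc k)" "mat_adjoint A' = A'"
    unfolding A'_def using Wc A by (auto simp: adjoint_mult' assoc_mult_mat')
  obtain A3 where A3: "A3 \<in> carrier_mat k k" "mat_adjoint A3 = A3"
    and A'_split: "A' = four_block_mat (real_diag_mat 1 (\<lambda>_. Re e)) (0\<^sub>m 1 k) (0\<^sub>m k 1) A3"
    by (rule hermitian_first_column_split[OF A'
          col_unitary_congruence[OF W zero_less_Suc A(1) Av[folded Wv], folded A'_def]])
  obtain U3 d3 where U3: "unitary_of U3 k" and A3_eq: "A3 = spectral_mat U3 k d3"
    using Suc.IH[OF A3] by blast
  have "W * A' * mat_adjoint W = (W * mat_adjoint W) * A * (W * mat_adjoint W)"
    unfolding A'_def using Wc A by (simp add: assoc_mult_mat')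
  hence "A = W * A' * mat_adjoint W" using WW' A by simp
  also have "A' = spectral_mat (four_block_mat (1\<^sub>m 1) (0\<^sub>m 1 k) (0\<^sub>m k 1) U3) (Suc k) (case_nat (Re e) d3)"
    unfolding A'_split A3_eq spectral_mat_four_block_one[OF U3] ..
  finally show ?case
    using spectral_mat_unitary_congruence[OF W unitary_of_four_block_one[OF U3]]
      unitary_of_mult[OF W unitary_of_four_block_one[OF U3]] by metis
qed

section \<open>Functions of a Hermitian matrix\<close>

lemma spectral_mat_mult:
  assumes U: "unitary_of U n"
    shows "spectral_mat U n a * spectral_mat U n b = spectral_mat U n (\<lambda>i. a i * b i)"
proof -
  have c: "U \<in> carrier_mat n n" and UU: "mat_adjoint U * U = 1\<^sub>m n" using U by (auto simp: unitary_of_def)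
  have d: "dim_row U = n" "dim_col U = n" using c by auto
  have "spectral_mat U n a * spectral_mat U n b = U * (real_diag_mat n a * ((mat_adjoint U * U) * (real_diag_mat n b * mat_adjoint U)))"
    unfolding spectral_mat_def using d by (simp add: assoc_mult_mat')
  also have "\<dots> = spectral_mat U n (\<lambda>i. a i * b i)" unfolding spectral_mat_def UU using d
    by (simp add: assoc_mult_mat' real_diag_mat_mult')
  finally show ?thesis .
qed

lemma spectral_mat_one: assumes U: "unitary_of U n" shows "spectral_mat U n (\<lambda>_. 1) = 1\<^sub>m n"
  using U unfolding spectral_mat_def unitary_of_def real_diag_mat_one by auto

lemma spectral_mat_minus:
  assumes U: "unitary_of U n"
    shows "spectral_mat U n a - spectral_mat U n b = spectral_mat U n (\<lambda>i. a i - b i)"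
proof -
  have c: "U \<in> carrier_mat n n" using U by (auto simp: unitary_of_def)
  have d: "dim_row U = n" "dim_col U = n" using c by auto
  show ?thesis unfolding spectral_mat_def real_diag_mat_minus[symmetric] using d
    by (simp add: mult_minus_distrib_mat' minus_mult_distrib_mat')
qed

lemma adjoint_spectral_mat:
  assumes U: "unitary_of U n"
    shows "mat_adjoint (spectral_mat U n a) = spectral_mat U n a"
proof -
  have c: "U \<in> carrier_mat n n" using U by (auto simp: unitary_of_def)
  show ?thesis unfolding spectral_mat_def
    using carrier_matD[OF c] by (simp add: adjoint_mult' assoc_mult_mat')
qed

lemma vec_norm2_spectral_mat_le:
  assumes U: "unitary_of U n"
    and d: "\<And>i. i < n \<Longrightarrow> \<bar>a i\<bar> \<le> c"
    and c: "c \<ge> 0"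
  and v: "v \<in> carrier_vec n"
  shows "vec_norm2 (spectral_mat U n a *\<^sub>v v) \<le> c * vec_norm2 v"
proof -
  have Uc: "U \<in> carrier_mat n n" and UU: "mat_adjoint U * U = 1\<^sub>m n" and UU': "U * mat_adjoint U = 1\<^sub>m n"
    using U by (auto simp: unitary_of_def)
  have Us: "mat_adjoint U \<in> carrier_mat n n" using Uc by auto
  have UsUs: "mat_adjoint (mat_adjoint U) * mat_adjoint U = 1\<^sub>m n" using UU' by simp
  have "spectral_mat U n a *\<^sub>v v = U *\<^sub>v (real_diag_mat n a *\<^sub>v (mat_adjoint U *\<^sub>v v))"
    unfolding spectral_mat_def using carrier_matD[OF Uc] v by (simp add: assoc_mult_mat_vec')
  hence "vec_norm2 (spectral_mat U n a *\<^sub>v v) = vec_norm2 (real_diag_mat n a *\<^sub>v (mat_adjoint U *\<^sub>v v))"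
    using vec_norm2_isometry[OF Uc UU, of "real_diag_mat n a *\<^sub>v (mat_adjoint U *\<^sub>v v)"]
      mult_mat_vec_carrier[OF real_diag_mat_carrier mult_mat_vec_carrier[OF Us v]] by simp
  also have "\<dots> \<le> c * vec_norm2 (mat_adjoint U *\<^sub>v v)" by (rule vec_norm2_real_diag_mat_le[OF d c]) (use Us v in auto)
  also have "vec_norm2 (mat_adjoint U *\<^sub>v v) = vec_norm2 v" by (rule vec_norm2_isometry[OF Us UsUs v])
  finally show ?thesis .
qed

lemma spec_norm_spectral_mat_le:
  assumes U: "unitary_of U n"
    and d: "\<And>i. i < n \<Longrightarrow> \<bar>a i\<bar> \<le> c"
    and c: "c \<ge> 0"
  shows "spec_norm (spectral_mat U n a) \<le> c"
  by (rule spec_norm_le[OF spectral_mat_carrier[OF U] c vec_norm2_spectral_mat_le[OF U d c]])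

lemma spectral_mat_col: assumes U: "unitary_of U n" and i: "i < n"
  shows "spectral_mat U n a *\<^sub>v col U i = complex_of_real (a i) \<cdot>\<^sub>v col U i"
    "col U i \<bullet>c col U i = 1" "col U i \<in> carrier_vec n"
proof -
  have Uc: "U \<in> carrier_mat n n" and UU: "mat_adjoint U * U = 1\<^sub>m n"
    using U by (auto simp: unitary_of_def)
  have Us: "mat_adjoint U \<in> carrier_mat n n" using Uc by auto
  have 1: "mat_adjoint U *\<^sub>v col U i = unit_vec n i"
    using col_mult2[OF Us Uc i] UU i by simp
  have 2: "real_diag_mat n a *\<^sub>v unit_vec n i = complex_of_real (a i) \<cdot>\<^sub>v unit_vec n i"
    by (rule eq_vecI) (auto simp: i)
  have "spectral_mat U n a *\<^sub>v col U i = U *\<^sub>v (real_diag_mat n a *\<^sub>v (mat_adjoint U *\<^sub>v col U i))"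
    unfolding spectral_mat_def using carrier_matD[OF Uc] i by (simp add: assoc_mult_mat_vec')
  also have "\<dots> = complex_of_real (a i) \<cdot>\<^sub>v (U *\<^sub>v unit_vec n i)" unfolding 1 2
    using Uc by (simp add: mult_mat_vec)
  also have "U *\<^sub>v unit_vec n i = col U i" using Uc i by (metis col_mult2 col_one one_carrier_mat right_mult_one_mat)
  finally show "spectral_mat U n a *\<^sub>v col U i = complex_of_real (a i) \<cdot>\<^sub>v col U i" .
  have "col U i \<bullet>c col U i = (mat_adjoint U * U) $$ (i,i)"
    using Uc i by (simp add: scalar_prod_def atLeast0LessThan mult.commute)
  thus "col U i \<bullet>c col U i = 1" using UU i by simp
  show "col U i \<in> carrier_vec n" using Uc i by auto
qed

lemma spectral_mat_cong:
  assumes "\<And>i. i < n \<Longrightarrow> a i = b i"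
    shows "spectral_mat U n a = spectral_mat U n b"
proof -
  have "real_diag_mat n a = real_diag_mat n b" by (rule eq_matI) (auto simp: assms)
  thus ?thesis by (simp add: spectral_mat_def)
qed

lemma real_diag_mat_quadratic_form:
  assumes y: "y \<in> carrier_vec n"
  shows "(real_diag_mat n a *\<^sub>v y) \<bullet>c y = complex_of_real (\<Sum>i<n. a i * (cmod (y $ i))\<^sup>2)"
proof -
  have "(real_diag_mat n a *\<^sub>v y) \<bullet>c y = (\<Sum>i<n. (real_diag_mat n a *\<^sub>v y) $ i * cnj (y $ i))"
    using y by (simp add: scalar_prod_def atLeast0LessThan del: index_mult_mat_vec)
  also have "\<dots> = (\<Sum>i<n. complex_of_real (a i) * y $ i * cnj (y $ i))"
    by (rule sum.cong) (use index_real_diag_mat_mult_vec[OF y] in auto)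
  also have "\<dots> = (\<Sum>i<n. complex_of_real (a i * (cmod (y $ i))\<^sup>2))"
    by (intro sum.cong refl) (simp add: complex_norm_square[symmetric])
  finally show ?thesis by simp
qed

lemma spectral_mat_quadratic_form:
  assumes U: "unitary_of U n" and x: "x \<in> carrier_vec n"
  shows "(spectral_mat U n a *\<^sub>v x) \<bullet>c x =
    (real_diag_mat n a *\<^sub>v (mat_adjoint U *\<^sub>v x)) \<bullet>c (mat_adjoint U *\<^sub>v x)"
proof -
  have Uc: "U \<in> carrier_mat n n" using U by (auto simp: unitary_of_def)
  have "(spectral_mat U n a *\<^sub>v x) \<bullet>c x = (U *\<^sub>v (real_diag_mat n a *\<^sub>v (mat_adjoint U *\<^sub>v x))) \<bullet>c x"
    unfolding spectral_mat_def using carrier_matD[OF Uc] x by (simp add: assoc_mult_mat_vec')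
  also have "\<dots> = (real_diag_mat n a *\<^sub>v (mat_adjoint U *\<^sub>v x)) \<bullet>c (mat_adjoint U *\<^sub>v x)"
    by (rule adjoint_cscalar_prod[OF Uc]) (use Uc x in auto)
  finally show ?thesis .
qed

lemma pos_def_spectral_mat:
  assumes U: "unitary_of U n" and pos: "\<And>i. i < n \<Longrightarrow> a i > 0"
  shows "pos_def_mat (spectral_mat U n a)"
proof -
  have Uc: "U \<in> carrier_mat n n" and UU': "U * mat_adjoint U = 1\<^sub>m n" using U by (auto simp: unitary_of_def)
  have "hermitian_mat (spectral_mat U n a)"
    unfolding hermitian_mat_def using adjoint_spectral_mat[OF U] carrier_matD[OF spectral_mat_carrier[OF U]]
    by (simp add: square_mat.simps)
  moreover have "Im ((spectral_mat U n a *\<^sub>v x) \<bullet>c x) = 0 \<and> Re ((spectral_mat U n a *\<^sub>v x) \<bullet>c x) > 0"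
    if x: "x \<in> carrier_vec n" "x \<noteq> 0\<^sub>v n" for x
  proof -
    define y where "y = mat_adjoint U *\<^sub>v x"
    have y: "y \<in> carrier_vec n" unfolding y_def using Uc x by auto
    have "U *\<^sub>v y = x" unfolding y_def using UU' x carrier_matD[OF Uc] by (simp add: assoc_mult_mat_vec'[symmetric])
    hence "y \<noteq> 0\<^sub>v n" using x Uc by auto
    then obtain j where j: "j < n" "y $ j \<noteq> 0" using y by (metis eq_vecI carrier_vecD index_zero_vec)
    have "0 < a j * (cmod (y $ j))\<^sup>2" using pos[OF j(1)] j by simp
    also have "\<dots> \<le> (\<Sum>i<n. a i * (cmod (y $ i))\<^sup>2)"
    proof (rule member_le_sum)
      fix i assume "i \<in> {..<n} - {j}"
      hence "0 \<le> a i" using pos[of i] by auto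
      thus "0 \<le> a i * (cmod (y $ i))\<^sup>2" by simp
    qed (use j in auto)
    finally have "0 < (\<Sum>i<n. a i * (cmod (y $ i))\<^sup>2)" .
    moreover have "(spectral_mat U n a *\<^sub>v x) \<bullet>c x = complex_of_real (\<Sum>i<n. a i * (cmod (y $ i))\<^sup>2)"
      unfolding spectral_mat_quadratic_form[OF U x(1)] y_def[symmetric] by (rule real_diag_mat_quadratic_form[OF y])
    ultimately show ?thesis by simp
  qed
  ultimately show ?thesis unfolding pos_def_mat_def using carrier_matD(1)[OF spectral_mat_carrier[OF U]] by auto
qed

lemma spectral_mat_col_quadratic_form: assumes U: "unitary_of U n" and i: "i < n"
  shows "(spectral_mat U n a *\<^sub>v col U i) \<bullet>c col U i = complex_of_real (a i)"
  using spectral_mat_col[OF U i] by (simp add: cscalar_prod_smult_left)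

lemma spectral_mat_eigenvalue_bounds:
  assumes U: "unitary_of U n" and i: "i < n"
    and bounds: "\<And>v. v \<in> carrier_vec n \<Longrightarrow> vec_norm2 v = 1 \<Longrightarrow>
      a \<le> Re ((spectral_mat U n w *\<^sub>v v) \<bullet>c v) \<and> Re ((spectral_mat U n w *\<^sub>v v) \<bullet>c v) \<le> b"
  shows "a \<le> w i \<and> w i \<le> b"
proof -
  have u: "col U i \<in> carrier_vec n" "vec_norm2 (col U i) = 1"
    using spectral_mat_col[OF U i] vec_norm2_eq_1 by auto
  thus ?thesis using bounds[OF u] spectral_mat_col_quadratic_form[OF U i] by simp
qed

lemma pos_def_mat_quadratic_form:
  assumes "pos_def_mat M" "M \<in> carrier_mat n n" "x \<in> carrier_vec n" "x \<noteq> 0\<^sub>v n"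
  shows "Re ((M *\<^sub>v x) \<bullet>c x) > 0"
  using assms unfolding pos_def_mat_def by auto

lemma pos_def_mat_adjoint: "pos_def_mat M \<Longrightarrow> mat_adjoint M = M"
  unfolding pos_def_mat_def hermitian_mat_def by auto

lemma pos_def_sylvester_eq_0:
  assumes M: "M \<in> carrier_mat n n" "pos_def_mat M" and N: "N \<in> carrier_mat n n" "pos_def_mat N"
    and K: "K \<in> carrier_mat n n" "mat_adjoint K = K" and MKN: "M * K + K * N = 0\<^sub>m n n"
  shows "K = 0\<^sub>m n n"
proof -
  obtain U k where U: "unitary_of U n" and Keq: "K = spectral_mat U n k" using hermitian_spectral_mat[OF K] by blast
  have k0: "k i = 0" if i: "i < n" for i
  proof -
    define u where "u = col U i"
    have u: "u \<in> carrier_vec n" and uu: "u \<bullet>c u = 1" and Ku: "K *\<^sub>v u = complex_of_real (k i) \<cdot>\<^sub>v u"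
      using spectral_mat_col[OF U i] Keq unfolding u_def by auto
    have u0: "u \<noteq> 0\<^sub>v n" using uu u by auto
    have "0 = ((M * K + K * N) *\<^sub>v u) \<bullet>c u" unfolding MKN using u by (simp add: scalar_prod_def)
    also have "(M * K + K * N) *\<^sub>v u = M *\<^sub>v (K *\<^sub>v u) + K *\<^sub>v (N *\<^sub>v u)"
      using M N K u by (simp add: add_mult_distrib_mat_vec[of _ n n])
    also have "(M *\<^sub>v (K *\<^sub>v u) + K *\<^sub>v (N *\<^sub>v u)) \<bullet>c u = (M *\<^sub>v (K *\<^sub>v u)) \<bullet>c u + (K *\<^sub>v (N *\<^sub>v u)) \<bullet>c u"
      by (rule cscalar_prod_add_left) (use M N K u in auto)
    also have "(M *\<^sub>v (K *\<^sub>v u)) \<bullet>c u = complex_of_real (k i) * ((M *\<^sub>v u) \<bullet>c u)"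
      unfolding Ku using M u by (simp add: mult_mat_vec cscalar_prod_smult_left)
    also have "(K *\<^sub>v (N *\<^sub>v u)) \<bullet>c u = (N *\<^sub>v u) \<bullet>c (mat_adjoint K *\<^sub>v u)"
      by (rule adjoint_cscalar_prod[OF K(1)]) (use N u in auto)
    also have "\<dots> = complex_of_real (k i) * ((N *\<^sub>v u) \<bullet>c u)"
      unfolding K(2) Ku using N u by (simp add: cscalar_prod_smult_right)
    finally have "complex_of_real (k i) * ((M *\<^sub>v u) \<bullet>c u + (N *\<^sub>v u) \<bullet>c u) = 0"
      by (simp add: algebra_simps)
    moreover have "Re ((M *\<^sub>v u) \<bullet>c u + (N *\<^sub>v u) \<bullet>c u) > 0"
      using pos_def_mat_quadratic_form[OF M(2) M(1) u u0] pos_def_mat_quadratic_form[OF N(2) N(1) u u0] by simp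
    hence "(M *\<^sub>v u) \<bullet>c u + (N *\<^sub>v u) \<bullet>c u \<noteq> 0" by (metis less_irrefl zero_complex.sel(1))
    ultimately show ?thesis by simp
  qed
  have "K = spectral_mat U n (\<lambda>_. 0)" unfolding Keq by (rule spectral_mat_cong) (use k0 in auto)
  thus ?thesis using U unfolding spectral_mat_def unitary_of_def real_diag_mat_zero by auto
qed

lemma pos_def_square_inj:
  assumes M: "M \<in> carrier_mat n n" "pos_def_mat M" and N: "N \<in> carrier_mat n n" "pos_def_mat N"
    and MN: "M * M = N * N"
  shows "M = N"
proof -
  have K: "M - N \<in> carrier_mat n n" "mat_adjoint (M - N) = M - N"
    using adjoint_minus[OF M(1) N(1)] pos_def_mat_adjoint[OF M(2)] pos_def_mat_adjoint[OF N(2)] N by auto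
  have "M * (M - N) + (M - N) * N = (M * M - M * N) + (M * N - N * N)"
    using M N by (simp add: mult_minus_distrib_mat minus_mult_distrib_mat)
  also have "\<dots> = 0\<^sub>m n n" using MN M N by (intro eq_matI) auto
  finally have "M - N = 0\<^sub>m n n" by (rule pos_def_sylvester_eq_0[OF M N K])
  hence "N + (M - N) = N" using N by simp
  thus ?thesis using add_minus_cancel_mat[OF M(1) N(1)] by simp
qed

lemma inv_sqrt_real_squared:
  assumes "(x::real) > 0"
    shows "1 / sqrt x * (1 / sqrt x) * x = 1" "x * (1 / sqrt x * (1 / sqrt x)) = 1"
proof -
  have s: "sqrt x * sqrt x = x" using assms by simp
  have "sqrt x > 0" using assms by simp
  thus "1 / sqrt x * (1 / sqrt x) * x = 1" "x * (1 / sqrt x * (1 / sqrt x)) = 1" using s by (simp_all add: field_simps)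
qed

lemma inv_sqrt_mat_spectral_mat:
  assumes U: "unitary_of U n"
    and pos: "\<And>i. i < n \<Longrightarrow> w i > 0"
  shows "inv_sqrt_mat (spectral_mat U n w) = spectral_mat U n (\<lambda>i. 1 / sqrt (w i))"
proof -
  let ?W = "spectral_mat U n w" and ?M = "spectral_mat U n (\<lambda>i. 1 / sqrt (w i))"
  have dW: "dim_row ?W = n" using spectral_mat_carrier[OF U] by auto
  have MMW: "?M * ?M * ?W = 1\<^sub>m n"
  proof -
    have "?M * ?M * ?W = spectral_mat U n (\<lambda>i. 1 / sqrt (w i) * (1 / sqrt (w i)) * w i)"
      by (simp add: spectral_mat_mult[OF U])
    also have "\<dots> = spectral_mat U n (\<lambda>_. 1)" by (rule spectral_mat_cong, rule inv_sqrt_real_squared(1), rule pos)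
    finally show ?thesis using spectral_mat_one[OF U] by simp
  qed
  have WMM: "?W * (?M * ?M) = 1\<^sub>m n"
  proof -
    have "?W * (?M * ?M) = spectral_mat U n (\<lambda>i. w i * (1 / sqrt (w i) * (1 / sqrt (w i))))"
      by (simp add: spectral_mat_mult[OF U])
    also have "\<dots> = spectral_mat U n (\<lambda>_. 1)" by (rule spectral_mat_cong, rule inv_sqrt_real_squared(2), rule pos)
    finally show ?thesis using spectral_mat_one[OF U] by simp
  qed
  have PM: "?M \<in> carrier_mat n n \<and> pos_def_mat ?M \<and> ?M * ?M * ?W = 1\<^sub>m n"
    using spectral_mat_carrier[OF U] pos_def_spectral_mat[OF U] pos MMW by auto
  show ?thesis unfolding inv_sqrt_mat_def dW
  proof (rule the_equality)
    show "?M \<in> carrier_mat n n \<and> pos_def_mat ?M \<and> ?M * ?M * ?W = 1\<^sub>m n" by (rule PM)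
  next
    fix X assume X: "X \<in> carrier_mat n n \<and> pos_def_mat X \<and> X * X * ?W = 1\<^sub>m n"
    have Xc: "X \<in> carrier_mat n n" using X by auto
    have dX: "dim_row X = n" "dim_col X = n" using Xc by auto
    have dM: "dim_row ?M = n" "dim_col ?M = n" using spectral_mat_carrier[OF U] by auto
    have dW': "dim_col ?W = n" using spectral_mat_carrier[OF U] by auto
    have "X * X = X * X * (?W * (?M * ?M))" using WMM dX by simp
    also have "\<dots> = (X * X * ?W) * (?M * ?M)" using dX dM dW dW' by (simp add: assoc_mult_mat')
    also have "\<dots> = ?M * ?M" using X dM by simp
    finally show "X = ?M" using pos_def_square_inj[of X n ?M] X PM by auto
  qed
qed

lemma abs_inv_sqrt_minus_one_le:
  fixes w x :: real assumes "1 \<le> w" "w \<le> 1 + x" "0 \<le> x"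
    shows "\<bar>1 / sqrt w - 1\<bar> \<le> x"
proof -
  have sw: "sqrt w \<ge> 1" using assms by simp
  have le1: "1 / sqrt w \<le> 1" using sw by simp
  have "1 - x \<le> 1 / sqrt w"
  proof (cases "x \<le> 1")
    case False
    have "0 \<le> 1 / sqrt w" using sw by simp
    thus ?thesis using False by linarith
  next
    case True
    have "(1 - x)^2 * w \<le> (1 - x)^2 * (1 + x)" using assms by (intro mult_left_mono) auto
    also have "(1 - x)^2 * (1 + x) = 1 - x * (1 + x * (1 - x))" by (simp add: power2_eq_square algebra_simps)
    also have "\<dots> \<le> 1" using True assms by (simp add: mult_nonneg_nonneg)
    finally have "(1 - x)^2 * w \<le> 1" .
    hence "sqrt ((1 - x)^2 * w) \<le> 1" by simp
    hence "(1 - x) * sqrt w \<le> 1" using True by (simp add: real_sqrt_mult)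
    thus ?thesis using sw by (simp add: field_simps)
  qed
  thus ?thesis using le1 by linarith
qed

lemma abs_sqrt_minus_one_le:
  fixes t x :: real assumes "1 - x \<le> t" "t \<le> 1" "0 \<le> x" "x \<le> 1"
    shows "\<bar>sqrt t - 1\<bar> \<le> x"
proof -
  have t0: "0 \<le> t" using assms by linarith
  have s1: "sqrt t \<le> 1" using assms by simp
  have "t = sqrt t * sqrt t" by (metis t0 abs_of_nonneg real_sqrt_mult_self)
  also have "\<dots> \<le> sqrt t * 1" using s1 t0 by (intro mult_left_mono) auto
  finally have "t \<le> sqrt t" by simp
  thus ?thesis using assms s1 by linarith
qed

lemma inv_sqrt_mat_near_one:
  assumes U: "unitary_of U n" and \<delta>: "0 \<le> \<delta>" and w: "\<And>i. i < n \<Longrightarrow> 1 \<le> w i \<and> w i \<le> 1 + \<delta>"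
  defines "M \<equiv> inv_sqrt_mat (spectral_mat U n w)"
  shows "M \<in> carrier_mat n n" "mat_adjoint M = M" "spec_norm (M - 1\<^sub>m n) \<le> \<delta>" "spec_norm M \<le> 1"
    "\<exists>M' \<in> carrier_mat n n. M' * M = 1\<^sub>m n"
proof -
  have wpos: "w i > 0" if "i < n" for i using w[OF that] by linarith
  have M: "M = spectral_mat U n (\<lambda>i. 1 / sqrt (w i))"
    unfolding M_def by (rule inv_sqrt_mat_spectral_mat[OF U wpos])
  show "M \<in> carrier_mat n n" "mat_adjoint M = M"
    unfolding M by (rule spectral_mat_carrier[OF U], rule adjoint_spectral_mat[OF U])
  have "M - 1\<^sub>m n = spectral_mat U n (\<lambda>i. 1 / sqrt (w i) - 1)"
    unfolding M spectral_mat_one[OF U, symmetric] by (rule spectral_mat_minus[OF U])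
  also have "spec_norm \<dots> \<le> \<delta>"
  proof (rule spec_norm_spectral_mat_le[OF U _ \<delta>])
    fix i assume "i < n"
    thus "\<bar>1 / sqrt (w i) - 1\<bar> \<le> \<delta>" using abs_inv_sqrt_minus_one_le[of "w i" \<delta>] w \<delta> by simp
  qed
  finally show "spec_norm (M - 1\<^sub>m n) \<le> \<delta>" .
  show "spec_norm M \<le> 1" unfolding M
  proof (rule spec_norm_spectral_mat_le[OF U])
    fix i assume "i < n"
    thus "\<bar>1 / sqrt (w i)\<bar> \<le> 1" using w[of i] by simp
  qed simp
  have "spectral_mat U n (\<lambda>i. sqrt (w i)) * M = spectral_mat U n (\<lambda>_. 1)"
  proof (unfold M spectral_mat_mult[OF U], rule spectral_mat_cong)
    fix i assume "i < n"
    thus "sqrt (w i) * (1 / sqrt (w i)) = 1" using wpos[of i] by simp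
  qed
  thus "\<exists>M' \<in> carrier_mat n n. M' * M = 1\<^sub>m n"
    unfolding spectral_mat_one[OF U] using spectral_mat_carrier[OF U] by blast
qed

lemma inv_sqrt_one_plus_gram:
  assumes G: "G \<in> carrier_mat k m" and Gn: "spec_norm G \<le> \<epsilon>"
  defines "L \<equiv> inv_sqrt_mat (1\<^sub>m m + mat_adjoint G * G)"
  shows "L \<in> carrier_mat m m" "mat_adjoint L = L" "spec_norm (L - 1\<^sub>m m) \<le> \<epsilon>\<^sup>2" "spec_norm L \<le> 1"
    "\<exists>L' \<in> carrier_mat m m. L' * L = 1\<^sub>m m"
proof -
  define W where "W = 1\<^sub>m m + mat_adjoint G * G"
  have GG: "mat_adjoint G * G \<in> carrier_mat m m" using G by auto
  have W: "W \<in> carrier_mat m m" using GG unfolding W_def by simp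
  have "mat_adjoint W = W"
    unfolding W_def adjoint_add[OF one_carrier_mat GG] adjoint_mult[OF adjoint_carrier_mat[OF G] G] by simp
  then obtain U w where U: "unitary_of U m" and Weq: "W = spectral_mat U m w"
    using hermitian_spectral_mat[OF W] by blast
  have quadratic_form: "Re ((W *\<^sub>v v) \<bullet>c v) = 1 + (vec_norm2 (G *\<^sub>v v))\<^sup>2"
    if v: "v \<in> carrier_vec m" "vec_norm2 v = 1" for v
  proof -
    have "W *\<^sub>v v = v + (mat_adjoint G * G) *\<^sub>v v"
      unfolding W_def add_mult_distrib_mat_vec[OF one_carrier_mat GG v(1)] using v by simp
    hence "(W *\<^sub>v v) \<bullet>c v = v \<bullet>c v + ((mat_adjoint G * G) *\<^sub>v v) \<bullet>c v"
      using cscalar_prod_add_left[of v m "(mat_adjoint G * G) *\<^sub>v v" v] v GG by simp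
    thus ?thesis using gram_quadratic_form[OF G v(1)] vec_norm2_square[of v] v(2) by simp
  qed
  have wb: "1 \<le> w i \<and> w i \<le> 1 + \<epsilon>\<^sup>2" if i: "i < m" for i
  proof (rule spectral_mat_eigenvalue_bounds[OF U i], unfold Weq[symmetric])
    fix v :: "complex vec" assume v: "v \<in> carrier_vec m" "vec_norm2 v = 1"
    have "(vec_norm2 (G *\<^sub>v v))\<^sup>2 \<le> \<epsilon>\<^sup>2"
      using vec_norm2_mult_le_spec_norm[OF G v(1)] Gn v by (intro power_mono) simp_all
    thus "1 \<le> Re ((W *\<^sub>v v) \<bullet>c v) \<and> Re ((W *\<^sub>v v) \<bullet>c v) \<le> 1 + \<epsilon>\<^sup>2"
      unfolding quadratic_form[OF v] by simp
  qed
  have L: "L = inv_sqrt_mat (spectral_mat U m w)" unfolding L_def W_def[symmetric] Weq ..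
  show "L \<in> carrier_mat m m" "mat_adjoint L = L" "spec_norm (L - 1\<^sub>m m) \<le> \<epsilon>\<^sup>2"
    "spec_norm L \<le> 1" "\<exists>L' \<in> carrier_mat m m. L' * L = 1\<^sub>m m"
    unfolding L using inv_sqrt_mat_near_one[OF U zero_le_power2 wb] by simp_all
qed

lemma sqrt_mat_near_one:
  assumes U: "unitary_of U n" and \<delta>: "0 \<le> \<delta>" "\<delta> < 1"
    and t: "\<And>i. i < n \<Longrightarrow> 1 - \<delta> \<le> t i \<and> t i \<le> 1"
  defines "R \<equiv> spectral_mat U n (\<lambda>i. sqrt (t i))" and "R' \<equiv> spectral_mat U n (\<lambda>i. 1 / sqrt (t i))"
  shows "R \<in> carrier_mat n n" "mat_adjoint R = R" "spec_norm (R - 1\<^sub>m n) \<le> \<delta>" "spec_norm R \<le> 1"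
    "R' \<in> carrier_mat n n" "R' * R = 1\<^sub>m n" "mat_adjoint R' = R'" "R' * (spectral_mat U n t * R') = 1\<^sub>m n"
proof -
  have tpos: "t i > 0" if "i < n" for i using t[OF that] \<delta> by linarith
  show "R \<in> carrier_mat n n" "mat_adjoint R = R" "R' \<in> carrier_mat n n" "mat_adjoint R' = R'"
    unfolding R_def R'_def using U by (simp_all add: adjoint_spectral_mat)
  have "R - 1\<^sub>m n = spectral_mat U n (\<lambda>i. sqrt (t i) - 1)"
    unfolding R_def spectral_mat_one[OF U, symmetric] by (rule spectral_mat_minus[OF U])
  also have "spec_norm \<dots> \<le> \<delta>"
  proof (rule spec_norm_spectral_mat_le[OF U _ \<delta>(1)])
    fix i assume "i < n"
    thus "\<bar>sqrt (t i) - 1\<bar> \<le> \<delta>" using abs_sqrt_minus_one_le[of \<delta> "t i"] t \<delta> by simp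
  qed
  finally show "spec_norm (R - 1\<^sub>m n) \<le> \<delta>" .
  show "spec_norm R \<le> 1" unfolding R_def
  proof (rule spec_norm_spectral_mat_le[OF U])
    fix i assume "i < n"
    thus "\<bar>sqrt (t i)\<bar> \<le> 1" using t[of i] tpos[of i] by simp
  qed simp
  have "R' * R = spectral_mat U n (\<lambda>_. 1)"
  proof (unfold R_def R'_def spectral_mat_mult[OF U], rule spectral_mat_cong)
    fix i assume "i < n"
    thus "1 / sqrt (t i) * sqrt (t i) = 1" using tpos[of i] by simp
  qed
  thus "R' * R = 1\<^sub>m n" unfolding spectral_mat_one[OF U] .
  have "R' * (spectral_mat U n t * R') = spectral_mat U n (\<lambda>_. 1)"
  proof (unfold R'_def spectral_mat_mult[OF U], rule spectral_mat_cong)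
    fix i assume "i < n"
    thus "1 / sqrt (t i) * (t i * (1 / sqrt (t i))) = 1" using tpos[of i] by (simp add: field_simps)
  qed
  thus "R' * (spectral_mat U n t * R') = 1\<^sub>m n" unfolding spectral_mat_one[OF U] .
qed

lemma polar_decomposition_near_isometry:
  assumes S: "S \<in> carrier_mat m q" and T: "T \<in> carrier_mat k q"
    and ST: "mat_adjoint S * S + mat_adjoint T * T = 1\<^sub>m q"
    and Sn: "spec_norm S \<le> \<epsilon>" and \<epsilon>: "\<epsilon> < 1"
  obtains H R where "H \<in> carrier_mat k q" "mat_adjoint H * H = 1\<^sub>m q" "R \<in> carrier_mat q q"
    "mat_adjoint R = R" "spec_norm (R - 1\<^sub>m q) \<le> \<epsilon>\<^sup>2" "spec_norm R \<le> 1" "T = H * R"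
proof -
  have \<epsilon>0: "0 \<le> \<epsilon>" using spec_norm_nonneg[OF S] Sn by linarith
  have \<epsilon>1: "\<epsilon>\<^sup>2 < 1" using \<epsilon>0 \<epsilon> by (simp add: power_less_one_iff)
  define N where "N = mat_adjoint T * T"
  have N: "N \<in> carrier_mat q q" "mat_adjoint N = N"
    unfolding N_def adjoint_mult[OF adjoint_carrier_mat[OF T] T] using T by auto
  then obtain U t where U: "unitary_of U q" and Neq: "N = spectral_mat U q t"
    using hermitian_spectral_mat by blast
  have tb: "1 - \<epsilon>\<^sup>2 \<le> t i \<and> t i \<le> 1" if i: "i < q" for i
  proof (rule spectral_mat_eigenvalue_bounds[OF U i], unfold Neq[symmetric])
    fix v :: "complex vec" assume v: "v \<in> carrier_vec q" "vec_norm2 v = 1"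
    have "Re ((N *\<^sub>v v) \<bullet>c v) = 1 - (vec_norm2 (S *\<^sub>v v))\<^sup>2"
      unfolding N_def gram_quadratic_form[OF T v(1)] using vec_norm2_gram_sum[OF S T ST v(1)] v by simp
    moreover have "(vec_norm2 (S *\<^sub>v v))\<^sup>2 \<le> \<epsilon>\<^sup>2"
      using vec_norm2_mult_le_spec_norm[OF S v(1)] Sn v by (intro power_mono) simp_all
    ultimately show "1 - \<epsilon>\<^sup>2 \<le> Re ((N *\<^sub>v v) \<bullet>c v) \<and> Re ((N *\<^sub>v v) \<bullet>c v) \<le> 1" by simp
  qed
  note R = sqrt_mat_near_one[OF U zero_le_power2 \<epsilon>1, where t = t, OF tb, folded Neq]
  define R' where "R' = spectral_mat U q (\<lambda>i. 1 / sqrt (t i))"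
  define H where "H = T * R'"
  show ?thesis
  proof (rule that[OF _ _ R(1-4)])
    show "H \<in> carrier_mat k q" unfolding H_def R'_def using T R(5) by auto
    have "mat_adjoint H * H = R' * (N * R')"
      unfolding H_def N_def R'_def using carrier_matD[OF T] carrier_matD[OF R(5)] R(7)
      by (simp add: adjoint_mult[OF T R(5)] assoc_mult_mat')
    thus "mat_adjoint H * H = 1\<^sub>m q" unfolding R'_def using R(8) by simp
    have "H * spectral_mat U q (\<lambda>i. sqrt (t i)) = T"
      unfolding H_def R'_def using T carrier_matD[OF R(1)] carrier_matD[OF R(5)] R(6)
      by (simp add: assoc_mult_mat')
    thus "T = H * spectral_mat U q (\<lambda>i. sqrt (t i))" ..
  qed
qed

section \<open>Block coordinates\<close>

definition embed_first :: "nat \<Rightarrow> nat \<Rightarrow> complex mat" where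
  "embed_first N m = mat N m (\<lambda>(i,j). if i = j then 1 else 0)"

definition embed_rest :: "nat \<Rightarrow> nat \<Rightarrow> complex mat" where
  "embed_rest N m = mat N (N - m) (\<lambda>(i,j). if i = j + m then 1 else 0)"

lemma embed_carrier[simp]:
  "embed_first N m \<in> carrier_mat N m" "embed_rest N m \<in> carrier_mat N (N - m)"
  by (simp_all add: embed_first_def embed_rest_def)

lemma dim_embed[simp]: "dim_row (embed_first N m) = N" "dim_col (embed_first N m) = m"
  "dim_row (embed_rest N m) = N" "dim_col (embed_rest N m) = N - m"
  by (simp_all add: embed_first_def embed_rest_def)

lemma index_embed[simp]:
  "i < N \<Longrightarrow> j < m \<Longrightarrow> embed_first N m $$ (i,j) = (if i = j then 1 else 0)"
  "i < N \<Longrightarrow> j < N - m \<Longrightarrow> embed_rest N m $$ (i,j) = (if i = j + m then 1 else 0)"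
  by (simp_all add: embed_first_def embed_rest_def)

lemma mult_embed_first: assumes "dim_col A = N" "m \<le> N"
  shows "A * embed_first N m = mat (dim_row A) m (\<lambda>(i,j). A $$ (i,j))"
proof (rule eq_matI)
  fix i j assume "i < dim_row (mat (dim_row A) m (\<lambda>(i,j). A $$ (i,j)))" "j < dim_col (mat (dim_row A) m (\<lambda>(i,j). A $$ (i,j)))"
  hence i: "i < dim_row A" and j: "j < m" by auto
  have "(A * embed_first N m) $$ (i,j) = (\<Sum>k<N. A $$ (i,k) * embed_first N m $$ (k,j))"
    using i j assms by (simp add: scalar_prod_def atLeast0LessThan)
  also have "\<dots> = (\<Sum>k<N. if k = j then A $$ (i,k) else 0)"
    using j by (intro sum.cong) auto
  also have "\<dots> = A $$ (i,j)" using j assms by simp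
  finally show "(A * embed_first N m) $$ (i,j) = mat (dim_row A) m (\<lambda>(i,j). A $$ (i,j)) $$ (i,j)" using i j by simp
qed auto

lemma mult_embed_rest: assumes "dim_col A = N" "m \<le> N"
  shows "A * embed_rest N m = mat (dim_row A) (N - m) (\<lambda>(i,j). A $$ (i,j + m))"
proof (rule eq_matI)
  fix i j assume "i < dim_row (mat (dim_row A) (N - m) (\<lambda>(i,j). A $$ (i,j + m)))" "j < dim_col (mat (dim_row A) (N - m) (\<lambda>(i,j). A $$ (i,j + m)))"
  hence i: "i < dim_row A" and j: "j < N - m" by auto
  have "(A * embed_rest N m) $$ (i,j) = (\<Sum>k<N. A $$ (i,k) * embed_rest N m $$ (k,j))"
    using i j assms by (simp add: scalar_prod_def atLeast0LessThan)
  also have "\<dots> = (\<Sum>k<N. if k = j + m then A $$ (i,k) else 0)"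
    using j by (intro sum.cong) auto
  also have "\<dots> = A $$ (i,j + m)" using j assms by simp
  finally show "(A * embed_rest N m) $$ (i,j) = mat (dim_row A) (N - m) (\<lambda>(i,j). A $$ (i,j + m)) $$ (i,j)" using i j by simp
qed auto

lemma adjoint_embed_first_mult: assumes "dim_row A = N" "m \<le> N"
  shows "mat_adjoint (embed_first N m) * A = mat m (dim_col A) (\<lambda>(i,j). A $$ (i,j))"
proof (rule eq_matI)
  fix i j assume "i < dim_row (mat m (dim_col A) (\<lambda>(i,j). A $$ (i,j)))" "j < dim_col (mat m (dim_col A) (\<lambda>(i,j). A $$ (i,j)))"
  hence i: "i < m" and j: "j < dim_col A" by auto
  have "(mat_adjoint (embed_first N m) * A) $$ (i,j) = (\<Sum>k<N. mat_adjoint (embed_first N m) $$ (i,k) * A $$ (k,j))"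
    using i j assms by (simp add: scalar_prod_def atLeast0LessThan)
  also have "\<dots> = (\<Sum>k<N. if k = i then A $$ (k,j) else 0)"
    using i assms by (intro sum.cong) auto
  also have "\<dots> = A $$ (i,j)" using i assms by simp
  finally show "(mat_adjoint (embed_first N m) * A) $$ (i,j) = mat m (dim_col A) (\<lambda>(i,j). A $$ (i,j)) $$ (i,j)" using i j by simp
qed auto

lemma adjoint_embed_rest_mult: assumes "dim_row A = N" "m \<le> N"
  shows "mat_adjoint (embed_rest N m) * A = mat (N - m) (dim_col A) (\<lambda>(i,j). A $$ (i + m,j))"
proof (rule eq_matI)
  fix i j assume "i < dim_row (mat (N - m) (dim_col A) (\<lambda>(i,j). A $$ (i + m,j)))" "j < dim_col (mat (N - m) (dim_col A) (\<lambda>(i,j). A $$ (i + m,j)))"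
  hence i: "i < N - m" and j: "j < dim_col A" by auto
  have "(mat_adjoint (embed_rest N m) * A) $$ (i,j) = (\<Sum>k<N. mat_adjoint (embed_rest N m) $$ (i,k) * A $$ (k,j))"
    using i j assms by (simp add: scalar_prod_def atLeast0LessThan)
  also have "\<dots> = (\<Sum>k<N. if k = i + m then A $$ (k,j) else 0)"
    using i assms by (intro sum.cong) auto
  also have "\<dots> = A $$ (i + m,j)" using i assms by simp
  finally show "(mat_adjoint (embed_rest N m) * A) $$ (i,j) = mat (N - m) (dim_col A) (\<lambda>(i,j). A $$ (i + m,j)) $$ (i,j)" using i j by simp
qed auto

lemma mult_adjoint_embed_first: assumes "dim_col A = m" "m \<le> N"
  shows "A * mat_adjoint (embed_first N m) = mat (dim_row A) N (\<lambda>(i,j). if j < m then A $$ (i,j) else 0)"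
proof (rule eq_matI)
  fix i j assume "i < dim_row (mat (dim_row A) N (\<lambda>(i,j). if j < m then A $$ (i,j) else 0))"
    "j < dim_col (mat (dim_row A) N (\<lambda>(i,j). if j < m then A $$ (i,j) else 0))"
  hence i: "i < dim_row A" and j: "j < N" by auto
  have "(A * mat_adjoint (embed_first N m)) $$ (i,j) = (\<Sum>k<m. A $$ (i,k) * mat_adjoint (embed_first N m) $$ (k,j))"
    using i j assms by (simp add: scalar_prod_def atLeast0LessThan)
  also have "\<dots> = (\<Sum>k<m. if k = j then A $$ (i,k) else 0)"
    using j by (intro sum.cong) auto
  also have "\<dots> = (if j < m then A $$ (i,j) else 0)" by simp
  finally show "(A * mat_adjoint (embed_first N m)) $$ (i,j) = mat (dim_row A) N (\<lambda>(i,j). if j < m then A $$ (i,j) else 0) $$ (i,j)"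
    using i j by simp
qed (use assms in auto)

lemma mult_adjoint_embed_rest: assumes "dim_col A = N - m" "m \<le> N"
  shows "A * mat_adjoint (embed_rest N m) = mat (dim_row A) N (\<lambda>(i,j). if m \<le> j then A $$ (i,j - m) else 0)"
proof (rule eq_matI)
  fix i j assume "i < dim_row (mat (dim_row A) N (\<lambda>(i,j). if m \<le> j then A $$ (i,j - m) else 0))"
    "j < dim_col (mat (dim_row A) N (\<lambda>(i,j). if m \<le> j then A $$ (i,j - m) else 0))"
  hence i: "i < dim_row A" and j: "j < N" by auto
  have "(A * mat_adjoint (embed_rest N m)) $$ (i,j) = (\<Sum>k<N - m. A $$ (i,k) * mat_adjoint (embed_rest N m) $$ (k,j))"
    using i j assms by (simp add: scalar_prod_def atLeast0LessThan)
  also have "\<dots> = (\<Sum>k<N - m. if m \<le> j \<and> k = j - m then A $$ (i,k) else 0)"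
    using j by (intro sum.cong) auto
  also have "\<dots> = (if m \<le> j then A $$ (i,j - m) else 0)"
    using j by (cases "m \<le> j") auto
  finally show "(A * mat_adjoint (embed_rest N m)) $$ (i,j) = mat (dim_row A) N (\<lambda>(i,j). if m \<le> j then A $$ (i,j - m) else 0) $$ (i,j)"
    using i j by simp
qed (use assms in auto)

lemma embed_first_orthonormal:
  "m \<le> N \<Longrightarrow> mat_adjoint (embed_first N m) * embed_first N m = 1\<^sub>m m"
  by (subst adjoint_embed_first_mult) (auto intro!: eq_matI)

lemma embed_rest_orthonormal:
  "m \<le> N \<Longrightarrow> mat_adjoint (embed_rest N m) * embed_rest N m = 1\<^sub>m (N - m)"
  by (subst adjoint_embed_rest_mult) (auto intro!: eq_matI)

lemma embed_first_rest_orthogonal: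
  "m \<le> N \<Longrightarrow> mat_adjoint (embed_first N m) * embed_rest N m = 0\<^sub>m m (N - m)"
  by (subst adjoint_embed_first_mult) (auto intro!: eq_matI)

lemma embed_rest_first_orthogonal:
  "m \<le> N \<Longrightarrow> mat_adjoint (embed_rest N m) * embed_first N m = 0\<^sub>m (N - m) m"
  by (subst adjoint_embed_rest_mult) (auto intro!: eq_matI)

lemma embed_first_rest_complete:
  "m \<le> N \<Longrightarrow> embed_first N m * mat_adjoint (embed_first N m) + embed_rest N m * mat_adjoint (embed_rest N m) = 1\<^sub>m N"
  by (subst mult_adjoint_embed_first, simp, simp, subst mult_adjoint_embed_rest, simp, simp) (auto intro!: eq_matI)

lemma spec_norm_embed_le_1: assumes "m \<le> N"
  shows "spec_norm (embed_first N m) \<le> 1" "spec_norm (embed_rest N m) \<le> 1"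
    "spec_norm (mat_adjoint (embed_first N m)) \<le> 1" "spec_norm (mat_adjoint (embed_rest N m)) \<le> 1"
  using spec_norm_isometry_le_1[OF embed_carrier(1) embed_first_orthonormal[OF assms]] spec_norm_isometry_le_1[OF embed_carrier(2) embed_rest_orthonormal[OF assms]]
    spec_norm_adjoint_isometry_le_1[OF embed_carrier(1) embed_first_orthonormal[OF assms]] spec_norm_adjoint_isometry_le_1[OF embed_carrier(2) embed_rest_orthonormal[OF assms]] by auto

lemma cols_first_embed:
  "dim_col X = N \<Longrightarrow> m \<le> N \<Longrightarrow> cols_first X m = X * embed_first N m"
  by (subst mult_embed_first) (auto simp: cols_first_def)

lemma cols_rest_embed:
  "dim_col X = N \<Longrightarrow> m \<le> N \<Longrightarrow> cols_rest X m = X * embed_rest N m"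
  by (subst mult_embed_rest) (auto simp: cols_rest_def)

lemma hcat_mult_embed_first: assumes "Y \<in> carrier_mat n m" "V \<in> carrier_mat n (p - m)" "m \<le> p"
  shows "hcat Y V * embed_first p m = Y"
  using assms by (subst mult_embed_first) (auto simp: hcat_def intro!: eq_matI)

lemma hcat_mult_embed_rest: assumes "Y \<in> carrier_mat n m" "V \<in> carrier_mat n (p - m)" "m \<le> p"
  shows "hcat Y V * embed_rest p m = V"
  using assms by (subst mult_embed_rest) (auto simp: hcat_def intro!: eq_matI)

lemma hcat_carrier: assumes "Y \<in> carrier_mat n m" "V \<in> carrier_mat n (p - m)" "m \<le> p"
  shows "hcat Y V \<in> carrier_mat n p"
  using assms by (auto simp: hcat_def)

lemma split_block_four_block_mat:
  assumes "A \<in> carrier_mat r1 c1" "B \<in> carrier_mat r1 c2" "C \<in> carrier_mat r2 c1" "D \<in> carrier_mat r2 c2"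
  shows "split_block (four_block_mat A B C D) r1 c1 = (A, B, C, D)"
  using assms unfolding split_block_def Let_def by (auto intro!: eq_matI)

lemma split_block_embed: assumes T: "T \<in> carrier_mat n p" and m: "m \<le> n" "m \<le> p"
  shows "split_block T m m = (mat_adjoint (embed_first n m) * T * embed_first p m, mat_adjoint (embed_first n m) * T * embed_rest p m,
     mat_adjoint (embed_rest n m) * T * embed_first p m, mat_adjoint (embed_rest n m) * T * embed_rest p m)"
proof -
  have d: "dim_row T = n" "dim_col T = p" using T by auto
  show ?thesis unfolding split_block_def Let_def using d m
    by (simp add: adjoint_embed_first_mult adjoint_embed_rest_mult mult_embed_first mult_embed_rest) (auto intro!: eq_matI)
qed

lemma four_block_mat_of_embed_blocks:
  assumes A: "A \<in> carrier_mat n p" and m: "m \<le> n" "m \<le> p"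
  shows "A = four_block_mat
    (mat_adjoint (embed_first n m) * A * embed_first p m) (mat_adjoint (embed_first n m) * A * embed_rest p m)
    (mat_adjoint (embed_rest n m) * A * embed_first p m) (mat_adjoint (embed_rest n m) * A * embed_rest p m)"
  using split_block(5)[OF split_block_embed[OF A m], of "n - m" "p - m"] A m by auto

lemma diagonal_mat_embed_cross: assumes D: "D \<in> carrier_mat n n" "diagonal_mat D" and m: "m \<le> n"
  shows "mat_adjoint (embed_first n m) * D * embed_rest n m = 0\<^sub>m m (n - m)"
    "mat_adjoint (embed_rest n m) * D * embed_first n m = 0\<^sub>m (n - m) m"
proof -
  have d: "dim_row D = n" "dim_col D = n" using D by auto
  have z: "D $$ (i,j) = 0" if "i < n" "j < n" "i \<noteq> j" for i j using D(2) that d unfolding diagonal_mat_def by auto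
  show "mat_adjoint (embed_first n m) * D * embed_rest n m = 0\<^sub>m m (n - m)"
    using d m by (simp add: adjoint_embed_first_mult mult_embed_rest) (auto intro!: eq_matI z)
  show "mat_adjoint (embed_rest n m) * D * embed_first n m = 0\<^sub>m (n - m) m"
    using d m by (simp add: adjoint_embed_rest_mult mult_embed_first) (auto intro!: eq_matI z)
qed

lemma adjoint_real_diagonal_mat:
  fixes D :: "complex mat"
    assumes D: "D \<in> carrier_mat n n" "diagonal_mat D" "\<forall>i<n. D $$ (i,i) \<in> \<real>"
  shows "mat_adjoint D = D"
proof (rule eq_matI)
  fix i j assume "i < dim_row D" "j < dim_col D"
  hence i: "i < n" and j: "j < n" using D by auto
  have a: "mat_adjoint D $$ (i,j) = cnj (D $$ (j,i))" by (rule index_adjoint) (use D i j in auto)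
  have "cnj (D $$ (j,i)) = D $$ (i,j)"
  proof (cases "i = j")
    case True thus ?thesis using D(3) i j D(1) by (auto simp: Reals_cnj_iff)
  next
    case False thus ?thesis using D(2) i j D(1) unfolding diagonal_mat_def by auto
  qed
  thus "mat_adjoint D $$ (i,j) = D $$ (i,j)" using a by simp
qed (use D in auto)

text \<open>The block column [A; C]; in X-coordinates, X_m + X_m' G is X * stack_mat n m I G.\<close>

definition stack_mat :: "nat \<Rightarrow> nat \<Rightarrow> complex mat \<Rightarrow> complex mat \<Rightarrow> complex mat" where
  "stack_mat N m A C = embed_first N m * A + embed_rest N m * C"

context
  fixes N m :: nat
  assumes m: "m \<le> N"
begin

lemma stack_mat_carrier:
  "A \<in> carrier_mat m q \<Longrightarrow> C \<in> carrier_mat (N - m) q \<Longrightarrow> stack_mat N m A C \<in> carrier_mat N q"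
  unfolding stack_mat_def by auto

lemma adjoint_embed_stack_mat:
  assumes A: "A \<in> carrier_mat m q" and C: "C \<in> carrier_mat (N - m) q"
  shows "mat_adjoint (embed_first N m) * stack_mat N m A C = A"
    "mat_adjoint (embed_rest N m) * stack_mat N m A C = C"
  unfolding stack_mat_def using A C
  by (simp_all add: mult_add_distrib_mat' assoc_mult_mat'[symmetric] embed_first_orthonormal[OF m]
      embed_rest_orthonormal[OF m] embed_first_rest_orthogonal[OF m] embed_rest_first_orthogonal[OF m])

lemma stack_mat_mult:
  assumes "A \<in> carrier_mat m q" "C \<in> carrier_mat (N - m) q" "W \<in> carrier_mat q r"
  shows "stack_mat N m A C * W = stack_mat N m (A * W) (C * W)"
  unfolding stack_mat_def using assms by (simp add: add_mult_distrib_mat' assoc_mult_mat')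

lemma stack_mat_decomposition:
  assumes Z: "Z \<in> carrier_mat N q"
  shows "Z = stack_mat N m (mat_adjoint (embed_first N m) * Z) (mat_adjoint (embed_rest N m) * Z)"
proof -
  have "Z = (embed_first N m * mat_adjoint (embed_first N m) +
      embed_rest N m * mat_adjoint (embed_rest N m)) * Z"
    unfolding embed_first_rest_complete[OF m] using Z by simp
  thus ?thesis unfolding stack_mat_def using Z by (simp add: add_mult_distrib_mat' assoc_mult_mat')
qed

lemma adjoint_stack_mat_mult_stack_mat:
  assumes "A \<in> carrier_mat m q" "C \<in> carrier_mat (N - m) q"
    and "A' \<in> carrier_mat m r" "C' \<in> carrier_mat (N - m) r"
  shows "mat_adjoint (stack_mat N m A C) * stack_mat N m A' C' = mat_adjoint A * A' + mat_adjoint C * C'"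
proof -
  have "mat_adjoint (stack_mat N m A C) =
      mat_adjoint A * mat_adjoint (embed_first N m) + mat_adjoint C * mat_adjoint (embed_rest N m)"
    unfolding stack_mat_def using assms by (simp add: adjoint_add' adjoint_mult')
  thus ?thesis
    using adjoint_embed_stack_mat[OF assms(3,4)] assms carrier_matD[OF stack_mat_carrier[OF assms(3,4)]]
    by (simp add: add_mult_distrib_mat' assoc_mult_mat')
qed

lemma adjoint_stack_mat_diagonal_stack_mat:
  assumes "A \<in> carrier_mat m q" "C \<in> carrier_mat (N - m) q"
    and "A' \<in> carrier_mat m r" "C' \<in> carrier_mat (N - m) r"
    and D: "D \<in> carrier_mat N N" "diagonal_mat D"
  shows "mat_adjoint (stack_mat N m A C) * D * stack_mat N m A' C' =
    mat_adjoint A * (mat_adjoint (embed_first N m) * D * embed_first N m) * A' +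
    mat_adjoint C * (mat_adjoint (embed_rest N m) * D * embed_rest N m) * C'"
proof -
  note cross = diagonal_mat_embed_cross[OF D m]
  have zero: "mat_adjoint (embed_first N m) * (D * (embed_rest N m * C')) = 0\<^sub>m m r"
    "mat_adjoint (embed_rest N m) * (D * (embed_first N m * A')) = 0\<^sub>m (N - m) r"
    using cross assms by (simp_all add: assoc_mult_mat'[symmetric])
  show ?thesis
    unfolding stack_mat_def using assms zero carrier_matD[OF assms(1)] carrier_matD[OF assms(2)]
      carrier_matD[OF assms(3)] carrier_matD[OF assms(4)]
    by (simp add: adjoint_add' adjoint_mult' add_mult_distrib_mat' mult_add_distrib_mat' assoc_mult_mat'
        add_zero_mat_dims zero_add_mat_dims)
qed

lemma cols_first_add_cols_rest_mult:
  assumes X: "X \<in> carrier_mat N N" and G: "G \<in> carrier_mat (N - m) m"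
  shows "cols_first X m + cols_rest X m * G = X * stack_mat N m (1\<^sub>m m) G"
  unfolding cols_first_embed[OF carrier_matD(2)[OF X] m] cols_rest_embed[OF carrier_matD(2)[OF X] m]
    stack_mat_def using X G by (simp add: mult_add_distrib_mat' assoc_mult_mat')

lemma stack_graph_orthonormal_complement:
  assumes G: "G \<in> carrier_mat (N - m) m" and Z: "Z \<in> carrier_mat N q"
    and KZ: "mat_adjoint (stack_mat N m (1\<^sub>m m) G) * Z = 0\<^sub>m m q" and ZZ: "mat_adjoint Z * Z = 1\<^sub>m q"
  defines "S \<equiv> mat_adjoint (embed_first N m) * Z" and "T \<equiv> mat_adjoint (embed_rest N m) * Z"
  shows "S = - (mat_adjoint G * T)" "mat_adjoint S * S + mat_adjoint T * T = 1\<^sub>m q"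
proof -
  have S: "S \<in> carrier_mat m q" and T: "T \<in> carrier_mat (N - m) q" unfolding S_def T_def using Z by auto
  have Zs: "Z = stack_mat N m S T" unfolding S_def T_def by (rule stack_mat_decomposition[OF Z])
  have "S + mat_adjoint G * T = 0\<^sub>m m q"
    using KZ adjoint_stack_mat_mult_stack_mat[OF one_carrier_mat G S T] S unfolding Zs by simp
  from eq_uminus_of_add_eq_0_mat[OF S mult_carrier_mat[OF adjoint_carrier_mat[OF G] T] this]
  show "S = - (mat_adjoint G * T)" .
  show "mat_adjoint S * S + mat_adjoint T * T = 1\<^sub>m q"
    using ZZ adjoint_stack_mat_mult_stack_mat[OF S T S T] unfolding Zs by simp
qed

end

lemma mult_stack_mat:
  assumes X: "X \<in> carrier_mat N N" and m: "m \<le> N" and "A \<in> carrier_mat m q" "C \<in> carrier_mat (N - m) q"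
  shows "X * stack_mat N m A C = cols_first X m * A + cols_rest X m * C"
  unfolding stack_mat_def cols_first_embed[OF carrier_matD(2)[OF X] m] cols_rest_embed[OF carrier_matD(2)[OF X] m]
  using assms by (simp add: mult_add_distrib_mat' assoc_mult_mat')

section \<open>Coordinates with respect to a B-orthonormal basis\<close>

lemma unitary_congruence_eq_one:
  assumes P: "P \<in> carrier_mat n p" and B: "B \<in> carrier_mat n n"
    and U: "U \<in> carrier_mat p p" "unitary_mat U"
    and PU: "mat_adjoint (P * U) * B * (P * U) = 1\<^sub>m p"
  shows "mat_adjoint P * B * P = 1\<^sub>m p"
proof -
  have UU: "mat_adjoint U * U = 1\<^sub>m p" using U unfolding unitary_mat_def by auto
  have UU': "U * mat_adjoint U = 1\<^sub>m p"
    by (rule mat_mult_left_right_inverse[OF _ U(1) UU]) (use U in auto)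
  define W where "W = mat_adjoint P * B * P"
  have W: "W \<in> carrier_mat p p" unfolding W_def using P B by auto
  have UWU: "mat_adjoint U * (W * U) = 1\<^sub>m p"
    using PU unfolding W_def adjoint_mult[OF P U(1)] using P B U by (simp add: assoc_mult_mat')
  have "(U * mat_adjoint U) * W * (U * mat_adjoint U) = U * (mat_adjoint U * (W * U)) * mat_adjoint U"
    using W U by (simp add: assoc_mult_mat')
  thus ?thesis using W U unfolding UU' UWU W_def[symmetric] by (simp add: UU')
qed

context
  fixes n :: nat and B X :: "complex mat"
  assumes X: "X \<in> carrier_mat n n" and B: "B \<in> carrier_mat n n"
    and XBX: "mat_adjoint X * B * X = 1\<^sub>m n"
begin

lemma B_orthonormal_expansion:
  assumes W: "W \<in> carrier_mat n k"
  shows "X * (mat_adjoint X * B * W) = W"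
proof -
  have "X * (mat_adjoint X * B) = 1\<^sub>m n"
    by (rule mat_mult_left_right_inverse) (use X B XBX in auto)
  hence "X * mat_adjoint X * B = 1\<^sub>m n" using X B by (simp add: assoc_mult_mat')
  thus ?thesis using X B W by (simp add: assoc_mult_mat'[symmetric])
qed

lemma B_orthonormal_gram:
  assumes "A \<in> carrier_mat n k" "C \<in> carrier_mat n l"
  shows "mat_adjoint (X * A) * B * (X * C) = mat_adjoint A * C"
proof -
  have "mat_adjoint (X * A) * B * (X * C) = mat_adjoint A * ((mat_adjoint X * B * X) * C)"
    using assms X B by (simp add: adjoint_mult' assoc_mult_mat')
  thus ?thesis using XBX assms by simp
qed

lemma B_gram_cols_first_add_cols_rest:
  assumes m: "m \<le> n" and G: "G \<in> carrier_mat (n - m) m"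
  shows "mat_adjoint (cols_first X m + cols_rest X m * G) * B * (cols_first X m + cols_rest X m * G) =
    1\<^sub>m m + mat_adjoint G * G"
proof -
  have K: "stack_mat n m (1\<^sub>m m) G \<in> carrier_mat n m" by (rule stack_mat_carrier[OF m one_carrier_mat G])
  show ?thesis
    unfolding cols_first_add_cols_rest_mult[OF m X G] B_orthonormal_gram[OF K K]
      adjoint_stack_mat_mult_stack_mat[OF m one_carrier_mat G one_carrier_mat G] by simp
qed

lemma hcat_B_orthonormal_coordinates:
  assumes K: "K \<in> carrier_mat n m" and L: "L \<in> carrier_mat m m" "mat_adjoint L = L"
    and L': "L' \<in> carrier_mat m m" "L' * L = 1\<^sub>m m"
    and V: "V \<in> carrier_mat n (p - m)" and mp: "m \<le> p"
    and PBP: "mat_adjoint (hcat (X * K * L) V) * B * hcat (X * K * L) V = 1\<^sub>m p"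
  defines "M \<equiv> mat_adjoint X * B * hcat (X * K * L) V" and "Z \<equiv> mat_adjoint X * B * V"
  shows "M \<in> carrier_mat n p" "M * embed_first p m = K * L" "M * embed_rest p m = Z" "V = X * Z"
    "mat_adjoint K * Z = 0\<^sub>m m (p - m)" "mat_adjoint Z * Z = 1\<^sub>m (p - m)"
proof -
  define P where "P = hcat (X * K * L) V"
  have XKL: "X * K * L \<in> carrier_mat n m" using X K L by auto
  have P: "P \<in> carrier_mat n p" unfolding P_def by (rule hcat_carrier[OF XKL V mp])
  have MP: "M = mat_adjoint X * B * P" unfolding M_def P_def ..
  show M: "M \<in> carrier_mat n p" unfolding MP using X B P by auto
  have "mat_adjoint M * M = mat_adjoint P * B * P"
    using B_orthonormal_gram[OF M M] unfolding MP B_orthonormal_expansion[OF P] by simp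
  hence MM: "mat_adjoint M * M = 1\<^sub>m p" using PBP unfolding P_def by simp
  have "M * embed_first p m = mat_adjoint X * B * (P * embed_first p m)"
    unfolding MP using X B P by (simp add: assoc_mult_mat')
  also have "\<dots> = mat_adjoint (X * 1\<^sub>m n) * B * (X * (K * L))"
    unfolding P_def hcat_mult_embed_first[OF XKL V mp] using X K L by (simp add: assoc_mult_mat')
  also have "\<dots> = K * L"
    unfolding B_orthonormal_gram[OF one_carrier_mat mult_carrier_mat[OF K L(1)]] using K L by simp
  finally show MF1: "M * embed_first p m = K * L" .
  have "M * embed_rest p m = mat_adjoint X * B * (P * embed_rest p m)"
    unfolding MP using X B P by (simp add: assoc_mult_mat')
  thus MF2: "M * embed_rest p m = Z" unfolding Z_def P_def hcat_mult_embed_rest[OF XKL V mp] .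
  show "V = X * Z" unfolding Z_def by (rule B_orthonormal_expansion[OF V, symmetric])
  have gram: "mat_adjoint (M * E) * (M * E') = mat_adjoint E * E'"
    if "E \<in> carrier_mat p k" "E' \<in> carrier_mat p l" for E E' k l
  proof -
    have "mat_adjoint (M * E) * (M * E') = mat_adjoint E * (mat_adjoint M * M) * E'"
      using that M by (simp add: adjoint_mult' assoc_mult_mat')
    thus ?thesis using MM that by simp
  qed
  show "mat_adjoint Z * Z = 1\<^sub>m (p - m)"
    using gram[OF embed_carrier(2)[of p m] embed_carrier(2)[of p m]] MF2 embed_rest_orthonormal[OF mp] by simp
  have "L * (mat_adjoint K * Z) = mat_adjoint (K * L) * Z"
    using K L V X B unfolding Z_def by (simp add: adjoint_mult' assoc_mult_mat')
  also have "\<dots> = 0\<^sub>m m (p - m)"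
    using gram[OF embed_carrier(1)[of p m] embed_carrier(2)[of p m]] MF1 MF2 embed_first_rest_orthogonal[OF mp] by simp
  finally have "L' * (L * (mat_adjoint K * Z)) = 0\<^sub>m m (p - m)" using L' by simp
  thus "mat_adjoint K * Z = 0\<^sub>m m (p - m)"
    using L L' K V X B unfolding Z_def by (simp add: assoc_mult_mat'[symmetric])
qed

end

section \<open>The perturbation bounds\<close>

text \<open>
  M stands for X^* B [(X_m + X_m' G) L^{-1}  V], so that X^* B Q = M U, and the parameter L for L^{-1};
  the block columns of M are [L; G L] and [S; H R].
\<close>

locale perturbed_coordinates =
  fixes n m p :: nat and \<epsilon> :: real and G L S H R M :: "complex mat"
  assumes mn: "m \<le> n" and mp: "m \<le> p"
    and G: "G \<in> carrier_mat (n - m) m" and G_norm: "spec_norm G \<le> \<epsilon>"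
    and L: "L \<in> carrier_mat m m" "mat_adjoint L = L"
    and L_norm: "spec_norm L \<le> 1" "spec_norm (L - 1\<^sub>m m) \<le> \<epsilon>\<^sup>2"
    and S: "S \<in> carrier_mat m (p - m)" and S_norm: "spec_norm S \<le> \<epsilon>"
    and H: "H \<in> carrier_mat (n - m) (p - m)" "mat_adjoint H * H = 1\<^sub>m (p - m)"
    and R: "R \<in> carrier_mat (p - m) (p - m)" "mat_adjoint R = R"
    and R_norm: "spec_norm R \<le> 1" "spec_norm (R - 1\<^sub>m (p - m)) \<le> \<epsilon>\<^sup>2"
    and M: "M \<in> carrier_mat n p"
    and M_first: "M * embed_first p m = stack_mat n m L (G * L)"
    and M_rest: "M * embed_rest p m = stack_mat n m S (H * R)"
begin

lemma eps_nonneg: "0 \<le> \<epsilon>"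
  using spec_norm_nonneg[OF G] G_norm by linarith

lemma M_four_block: "M = four_block_mat L S (G * L) (H * R)"
proof -
  have GL: "G * L \<in> carrier_mat (n - m) m" and HR: "H * R \<in> carrier_mat (n - m) (p - m)"
    using G L H R by auto
  have block: "mat_adjoint E * M * E' = mat_adjoint E * (M * E')"
    if "E \<in> carrier_mat n k" "E' \<in> carrier_mat p l" for E E' k l
    using that M by (simp add: assoc_mult_mat')
  show ?thesis
    using four_block_mat_of_embed_blocks[OF M mn mp]
    unfolding block[OF embed_carrier(1) embed_carrier(1)] block[OF embed_carrier(1) embed_carrier(2)]
      block[OF embed_carrier(2) embed_carrier(1)] block[OF embed_carrier(2) embed_carrier(2)]
      M_first M_rest adjoint_embed_stack_mat[OF mn L(1) GL] adjoint_embed_stack_mat[OF mn S HR] .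
qed

text \<open>The off-diagonal blocks are S and G L, so the bound \<epsilon> holds there; (1 + \<epsilon>^2) \<epsilon> is the paper's.\<close>

lemma theta_bounds:
  "\<exists>\<Theta> \<in> carrier_mat n p. M = four_block_mat (1\<^sub>m m) (0\<^sub>m m (p - m)) (0\<^sub>m (n - m) m) H + \<Theta> \<and>
     (case split_block \<Theta> m m of (\<Theta>11, \<Theta>12, \<Theta>21, \<Theta>22) \<Rightarrow>
        spec_norm \<Theta>11 \<le> \<epsilon>\<^sup>2 \<and> spec_norm \<Theta>22 \<le> \<epsilon>\<^sup>2 \<and>
        spec_norm \<Theta>12 \<le> (1 + \<epsilon>\<^sup>2) * \<epsilon> \<and> spec_norm \<Theta>21 \<le> (1 + \<epsilon>\<^sup>2) * \<epsilon>)"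
proof
  have L1: "L - 1\<^sub>m m \<in> carrier_mat m m" and R1: "R - 1\<^sub>m (p - m) \<in> carrier_mat (p - m) (p - m)"
    by (rule minus_carrier_mat[OF one_carrier_mat])+
  have GL: "G * L \<in> carrier_mat (n - m) m" and HR1: "H * (R - 1\<^sub>m (p - m)) \<in> carrier_mat (n - m) (p - m)"
    using L G H R1 by auto
  define \<Theta> where "\<Theta> = four_block_mat (L - 1\<^sub>m m) S (G * L) (H * (R - 1\<^sub>m (p - m)))"
  show "\<Theta> \<in> carrier_mat n p" unfolding \<Theta>_def using four_block_carrier_mat[OF L1 HR1] mn mp by simp
  have "four_block_mat (1\<^sub>m m) (0\<^sub>m m (p - m)) (0\<^sub>m (n - m) m) H + \<Theta> =
      four_block_mat (1\<^sub>m m + (L - 1\<^sub>m m)) (0\<^sub>m m (p - m) + S) (0\<^sub>m (n - m) m + G * L)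
        (H + H * (R - 1\<^sub>m (p - m)))"
    unfolding \<Theta>_def by (rule add_four_block_mat) (use L1 S GL H(1) HR1 in auto)
  also have "\<dots> = M"
  proof (unfold M_four_block, intro cong_four_block_mat)
    show "1\<^sub>m m + (L - 1\<^sub>m m) = L" by (rule add_minus_cancel_mat[OF L(1) one_carrier_mat])
    show "0\<^sub>m m (p - m) + S = S" "0\<^sub>m (n - m) m + G * L = G * L" using S GL by simp_all
    have "H * (R - 1\<^sub>m (p - m)) = H * R - H" using H R by (simp add: mult_minus_distrib_mat')
    thus "H + H * (R - 1\<^sub>m (p - m)) = H * R"
      using add_minus_cancel_mat[of "H * R" "n - m" "p - m" H] H R by simp
  qed
  finally show "M = four_block_mat (1\<^sub>m m) (0\<^sub>m m (p - m)) (0\<^sub>m (n - m) m) H + \<Theta> \<and>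
     (case split_block \<Theta> m m of (\<Theta>11, \<Theta>12, \<Theta>21, \<Theta>22) \<Rightarrow>
        spec_norm \<Theta>11 \<le> \<epsilon>\<^sup>2 \<and> spec_norm \<Theta>22 \<le> \<epsilon>\<^sup>2 \<and>
        spec_norm \<Theta>12 \<le> (1 + \<epsilon>\<^sup>2) * \<epsilon> \<and> spec_norm \<Theta>21 \<le> (1 + \<epsilon>\<^sup>2) * \<epsilon>)"
  proof (intro conjI, simp, unfold \<Theta>_def split_block_four_block_mat[OF L1 S GL HR1] prod.case, intro conjI)
    have \<epsilon>: "\<epsilon> \<le> (1 + \<epsilon>\<^sup>2) * \<epsilon>" using eps_nonneg by (simp add: algebra_simps)
    show "spec_norm (L - 1\<^sub>m m) \<le> \<epsilon>\<^sup>2" by (fact L_norm(2))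
    show "spec_norm (H * (R - 1\<^sub>m (p - m))) \<le> \<epsilon>\<^sup>2"
      using spec_norm_isometry_mult_le[OF H R1] R_norm(2) by linarith
    show "spec_norm S \<le> (1 + \<epsilon>\<^sup>2) * \<epsilon>" using S_norm \<epsilon> by linarith
    show "spec_norm (G * L) \<le> (1 + \<epsilon>\<^sup>2) * \<epsilon>"
      using spec_norm_mult_le'[OF G L(1) G_norm L_norm(1)] \<epsilon> by linarith
  qed
qed

context
  fixes D :: "complex mat"
  assumes D: "D \<in> carrier_mat n n" "diagonal_mat D" "\<forall>i<n. D $$ (i,i) \<in> \<real>"
begin

abbreviation "D_first \<equiv> mat_adjoint (embed_first n m) * D * embed_first n m"
abbreviation "D_rest \<equiv> mat_adjoint (embed_rest n m) * D * embed_rest n m"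

lemma D_blocks:
  shows "D_first \<in> carrier_mat m m" "D_rest \<in> carrier_mat (n - m) (n - m)"
    "mat_adjoint D_first = D_first" "mat_adjoint D_rest = D_rest"
    "spec_norm D_first \<le> spec_norm D" "spec_norm D_rest \<le> spec_norm D"
    "spec_norm (mat_adjoint H * D_rest * H) \<le> spec_norm D"
proof -
  have Dh: "mat_adjoint D = D" by (rule adjoint_real_diagonal_mat[OF D])
  show "D_first \<in> carrier_mat m m" and D_rest: "D_rest \<in> carrier_mat (n - m) (n - m)" using D by auto
  show "mat_adjoint D_first = D_first" "mat_adjoint D_rest = D_rest" using D Dh by (simp_all add: adjoint_mult' assoc_mult_mat')
  show "spec_norm D_first \<le> spec_norm D" "spec_norm D_rest \<le> spec_norm D"
    using spec_norm_congruence_le[OF embed_carrier(1) spec_norm_embed_le_1(1)[OF mn] D(1)]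
      spec_norm_congruence_le[OF embed_carrier(2) spec_norm_embed_le_1(2)[OF mn] D(1)] by simp_all
  show "spec_norm (mat_adjoint H * D_rest * H) \<le> spec_norm D"
    using spec_norm_congruence_le[OF H(1) spec_norm_isometry_le_1[OF H] D_rest] \<open>spec_norm D_rest \<le> spec_norm D\<close>
    by linarith
qed

lemma M_congruence_four_block:
  "mat_adjoint M * D * M = four_block_mat
     (L * (D_first + mat_adjoint G * D_rest * G) * L) (L * (D_first * S + mat_adjoint G * D_rest * (H * R)))
     (mat_adjoint (L * (D_first * S + mat_adjoint G * D_rest * (H * R))))
     (mat_adjoint S * D_first * S + R * (mat_adjoint H * D_rest * H) * R)"
proof -
  note Dc = D_blocks(1,2)
  have GL: "G * L \<in> carrier_mat (n - m) m" and HR: "H * R \<in> carrier_mat (n - m) (p - m)"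
    using G L H R by auto
  have W: "mat_adjoint M * D * M \<in> carrier_mat p p" using M D by auto
  have block: "mat_adjoint E * (mat_adjoint M * D * M) * E' = mat_adjoint (M * E) * D * (M * E')"
    if "E \<in> carrier_mat p k" "E' \<in> carrier_mat p l" for E E' k l
    using that M D by (simp add: adjoint_mult' assoc_mult_mat')
  note quadratic = adjoint_stack_mat_diagonal_stack_mat[OF mn _ _ _ _ D(1,2)]
  have 11: "mat_adjoint (M * embed_first p m) * D * (M * embed_first p m) =
      L * (D_first + mat_adjoint G * D_rest * G) * L"
    unfolding M_first quadratic[OF L(1) GL L(1) GL] using L G Dc
    by (simp add: L(2) adjoint_mult' add_mult_distrib_mat' mult_add_distrib_mat' assoc_mult_mat')
  have 12: "mat_adjoint (M * embed_first p m) * D * (M * embed_rest p m) =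
      L * (D_first * S + mat_adjoint G * D_rest * (H * R))"
    unfolding M_first M_rest quadratic[OF L(1) GL S HR] using L G S H R Dc
    by (simp add: L(2) adjoint_mult' mult_add_distrib_mat' assoc_mult_mat')
  have 21: "mat_adjoint (M * embed_rest p m) * D * (M * embed_first p m) =
      mat_adjoint (mat_adjoint (M * embed_first p m) * D * (M * embed_rest p m))"
    using M D adjoint_real_diagonal_mat[OF D] by (simp add: adjoint_mult' assoc_mult_mat')
  have 22: "mat_adjoint (M * embed_rest p m) * D * (M * embed_rest p m) =
      mat_adjoint S * D_first * S + R * (mat_adjoint H * D_rest * H) * R"
    unfolding M_rest quadratic[OF S HR S HR] using S H R Dc
    by (simp add: R(2) adjoint_mult' assoc_mult_mat')
  show ?thesis
    using four_block_mat_of_embed_blocks[OF W mp mp]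
    unfolding block[OF embed_carrier(1) embed_carrier(1)] block[OF embed_carrier(1) embed_carrier(2)]
      block[OF embed_carrier(2) embed_carrier(1)] block[OF embed_carrier(2) embed_carrier(2)] 21
    unfolding 11 12 22 .
qed

lemma delta11_norm:
  "spec_norm (L * (D_first + mat_adjoint G * D_rest * G) * L - D_first) \<le> 4 * spec_norm D * \<epsilon>\<^sup>2"
proof -
  note Dc = D_blocks
  define X1 where "X1 = mat_adjoint G * D_rest * G"
  have X1: "X1 \<in> carrier_mat m m" unfolding X1_def using G Dc by auto
  have "spec_norm X1 \<le> \<epsilon> * spec_norm D * \<epsilon>"
    unfolding X1_def using spec_norm_adjoint_le[OF G] G_norm Dc(6) G
    by (intro spec_norm_mult_le'[OF mult_carrier_mat[OF adjoint_carrier_mat[OF G] Dc(2)] G]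
        spec_norm_mult_le'[OF adjoint_carrier_mat[OF G] Dc(2)]) auto
  hence X1n: "spec_norm (L * X1 * L) \<le> 1 * (\<epsilon> * spec_norm D * \<epsilon>) * 1"
    using L X1 L_norm by (intro spec_norm_mult_le'[OF mult_carrier_mat[OF L(1) X1] L(1)]
        spec_norm_mult_le'[OF L(1) X1]) auto
  have "L * (D_first + X1) * L - D_first = (L * D_first * L - D_first) + L * X1 * L"
    using L X1 Dc by (simp add: mult_add_distrib_mat' add_mult_distrib_mat') (intro eq_matI, simp_all)
  hence "spec_norm (L * (D_first + X1) * L - D_first) \<le> spec_norm (L * D_first * L - D_first) + spec_norm (L * X1 * L)"
    using spec_norm_add_le[of "L * D_first * L - D_first" m m "L * X1 * L"] L X1 Dc by (simp add: minus_carrier_mat)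
  also have "\<dots> \<le> 2 * spec_norm D * \<epsilon>\<^sup>2 + \<epsilon> * spec_norm D * \<epsilon>"
    using spec_norm_sandwich_minus_le[OF L(1) Dc(1) L_norm Dc(5)] X1n by simp
  also have "\<dots> \<le> 4 * spec_norm D * \<epsilon>\<^sup>2"
  proof -
    have "\<epsilon> * spec_norm D * \<epsilon> = spec_norm D * \<epsilon>\<^sup>2" by (simp add: power2_eq_square)
    thus ?thesis using mult_nonneg_nonneg[OF spec_norm_nonneg[OF D(1)] zero_le_power2[of \<epsilon>]] by linarith
  qed
  finally show ?thesis unfolding X1_def .
qed

lemma delta12_norm:
  "spec_norm (L * (D_first * S + mat_adjoint G * D_rest * (H * R))) \<le> 4 * spec_norm D * \<epsilon>"
proof -
  note Dc = D_blocks
  have HR: "H * R \<in> carrier_mat (n - m) (p - m)" using H R by auto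
  have "spec_norm (H * R) \<le> 1" using spec_norm_isometry_mult_le[OF H R(1)] R_norm by auto
  have GDHR: "mat_adjoint G * D_rest * (H * R) \<in> carrier_mat m (p - m)"
    by (rule mult_carrier_mat[OF mult_carrier_mat[OF adjoint_carrier_mat[OF G] Dc(2)] HR])
  have "spec_norm (mat_adjoint G * D_rest * (H * R)) \<le> \<epsilon> * spec_norm D * 1"
    using spec_norm_adjoint_le[OF G] G_norm Dc(6) G \<open>spec_norm (H * R) \<le> 1\<close>
    by (intro spec_norm_mult_le'[OF mult_carrier_mat[OF adjoint_carrier_mat[OF G] Dc(2)] HR]
        spec_norm_mult_le'[OF adjoint_carrier_mat[OF G] Dc(2)]) auto
  moreover have "spec_norm (D_first * S) \<le> spec_norm D * \<epsilon>"
    by (rule spec_norm_mult_le'[OF Dc(1) S Dc(5) S_norm])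
  ultimately have "spec_norm (D_first * S + mat_adjoint G * D_rest * (H * R)) \<le> 2 * spec_norm D * \<epsilon>"
    using spec_norm_add_le[OF mult_carrier_mat[OF Dc(1) S] GDHR] by (simp add: algebra_simps)
  hence "spec_norm (L * (D_first * S + mat_adjoint G * D_rest * (H * R))) \<le> 1 * (2 * spec_norm D * \<epsilon>)"
    by (rule spec_norm_mult_le'[OF L(1) add_carrier_mat[OF GDHR] L_norm(1)])
  thus ?thesis using mult_nonneg_nonneg[OF spec_norm_nonneg[OF D(1)] eps_nonneg] by linarith
qed

lemma delta22_norm:
  "spec_norm (mat_adjoint S * D_first * S + (R * (mat_adjoint H * D_rest * H) * R - mat_adjoint H * D_rest * H))
    \<le> 4 * spec_norm D * \<epsilon>\<^sup>2"
proof -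
  note Dc = D_blocks
  define Hd where "Hd = mat_adjoint H * D_rest * H"
  have Hd: "Hd \<in> carrier_mat (p - m) (p - m)" unfolding Hd_def using H Dc by auto
  have SDS: "mat_adjoint S * D_first * S \<in> carrier_mat (p - m) (p - m)" using S Dc by auto
  have "spec_norm (mat_adjoint S * D_first * S) \<le> \<epsilon> * spec_norm D * \<epsilon>"
    using spec_norm_adjoint_le[OF S] S_norm Dc(5) S
    by (intro spec_norm_mult_le'[OF mult_carrier_mat[OF adjoint_carrier_mat[OF S] Dc(1)] S]
        spec_norm_mult_le'[OF adjoint_carrier_mat[OF S] Dc(1)]) auto
  moreover have "spec_norm (R * Hd * R - Hd) \<le> 2 * spec_norm D * \<epsilon>\<^sup>2"
    using spec_norm_sandwich_minus_le[OF R(1) Hd R_norm Dc(7)[folded Hd_def]] .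
  ultimately have "spec_norm (mat_adjoint S * D_first * S + (R * Hd * R - Hd)) \<le> 3 * spec_norm D * \<epsilon>\<^sup>2"
    using spec_norm_add_le[OF SDS minus_carrier_mat[OF Hd, of "R * Hd * R"]]
    by (simp add: power2_eq_square algebra_simps)
  also have "\<dots> \<le> 4 * spec_norm D * \<epsilon>\<^sup>2" using spec_norm_nonneg[OF D(1)] by simp
  finally show ?thesis unfolding Hd_def .
qed

lemma delta_bounds:
  "\<exists>\<Delta> \<in> carrier_mat p p.
     mat_adjoint M * D * M = four_block_mat D_first (0\<^sub>m m (p - m)) (0\<^sub>m (p - m) m) (mat_adjoint H * D_rest * H) + \<Delta> \<and>
     (case split_block \<Delta> m m of (\<Delta>11, \<Delta>12, \<Delta>21, \<Delta>22) \<Rightarrow>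
        \<Delta>21 = mat_adjoint \<Delta>12 \<and> spec_norm \<Delta>11 \<le> 4 * spec_norm D * \<epsilon>\<^sup>2 \<and>
        spec_norm \<Delta>22 \<le> 4 * spec_norm D * \<epsilon>\<^sup>2 \<and> spec_norm \<Delta>12 \<le> 4 * spec_norm D * \<epsilon>)"
proof
  note Dc = D_blocks
  define Hd where "Hd = mat_adjoint H * D_rest * H"
  define A11 where "A11 = L * (D_first + mat_adjoint G * D_rest * G) * L"
  define A12 where "A12 = L * (D_first * S + mat_adjoint G * D_rest * (H * R))"
  define A22 where "A22 = mat_adjoint S * D_first * S"
  have Hd: "Hd \<in> carrier_mat (p - m) (p - m)" and A11: "A11 \<in> carrier_mat m m"
    and A12: "A12 \<in> carrier_mat m (p - m)" and A22: "A22 \<in> carrier_mat (p - m) (p - m)"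
    unfolding Hd_def A11_def A12_def A22_def using G L S H R Dc by auto
  have D11: "A11 - D_first \<in> carrier_mat m m" and D22: "A22 + (R * Hd * R - Hd) \<in> carrier_mat (p - m) (p - m)"
    using A11 A22 Hd by (auto simp: minus_carrier_mat)
  define \<Delta> where "\<Delta> = four_block_mat (A11 - D_first) A12 (mat_adjoint A12) (A22 + (R * Hd * R - Hd))"
  show "\<Delta> \<in> carrier_mat p p" unfolding \<Delta>_def using four_block_carrier_mat[OF D11 D22] mp by simp
  have "four_block_mat D_first (0\<^sub>m m (p - m)) (0\<^sub>m (p - m) m) Hd + \<Delta> =
      four_block_mat (D_first + (A11 - D_first)) (0\<^sub>m m (p - m) + A12) (0\<^sub>m (p - m) m + mat_adjoint A12)
        (Hd + (A22 + (R * Hd * R - Hd)))"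
    unfolding \<Delta>_def by (rule add_four_block_mat) (use Dc A12 Hd D11 D22 in auto)
  also have "\<dots> = mat_adjoint M * D * M"
    unfolding M_congruence_four_block A11_def[symmetric] A12_def[symmetric] A22_def[symmetric] Hd_def[symmetric]
  proof (intro cong_four_block_mat)
    show "D_first + (A11 - D_first) = A11" by (rule add_minus_cancel_mat[OF A11 Dc(1)])
    show "0\<^sub>m m (p - m) + A12 = A12" "0\<^sub>m (p - m) m + mat_adjoint A12 = mat_adjoint A12" using A12 by auto
    show "Hd + (A22 + (R * Hd * R - Hd)) = A22 + R * Hd * R"
      using Hd A22 R by (intro eq_matI) auto
  qed
  finally show "mat_adjoint M * D * M = four_block_mat D_first (0\<^sub>m m (p - m)) (0\<^sub>m (p - m) m) (mat_adjoint H * D_rest * H) + \<Delta> \<and>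
     (case split_block \<Delta> m m of (\<Delta>11, \<Delta>12, \<Delta>21, \<Delta>22) \<Rightarrow>
        \<Delta>21 = mat_adjoint \<Delta>12 \<and> spec_norm \<Delta>11 \<le> 4 * spec_norm D * \<epsilon>\<^sup>2 \<and>
        spec_norm \<Delta>22 \<le> 4 * spec_norm D * \<epsilon>\<^sup>2 \<and> spec_norm \<Delta>12 \<le> 4 * spec_norm D * \<epsilon>)"
    unfolding \<Delta>_def split_block_four_block_mat[OF D11 A12 adjoint_carrier_mat[OF A12] D22] Hd_def[symmetric]
    using delta11_norm delta12_norm delta22_norm unfolding A11_def A12_def A22_def Hd_def by simp
qed

end

lemma unitary_congruence_delta_bounds:
  assumes D: "D \<in> carrier_mat n n" "diagonal_mat D" "\<forall>i<n. D $$ (i,i) \<in> \<real>"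
    and Dm: "Dm = fst (split_block D m m)" and Dm': "Dm' = snd (snd (snd (split_block D m m)))"
    and U: "U \<in> carrier_mat p p"
  shows "\<exists>\<Delta> \<in> carrier_mat p p.
     mat_adjoint (M * U) * D * (M * U) =
       mat_adjoint U * (four_block_mat Dm (0\<^sub>m m (p - m)) (0\<^sub>m (p - m) m) (mat_adjoint H * Dm' * H) + \<Delta>) * U \<and>
     (case split_block \<Delta> m m of (\<Delta>11, \<Delta>12, \<Delta>21, \<Delta>22) \<Rightarrow>
        \<Delta>21 = mat_adjoint \<Delta>12 \<and> spec_norm \<Delta>11 \<le> 4 * spec_norm D * \<epsilon>\<^sup>2 \<and>
        spec_norm \<Delta>22 \<le> 4 * spec_norm D * \<epsilon>\<^sup>2 \<and> spec_norm \<Delta>12 \<le> 4 * spec_norm D * \<epsilon>)"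
proof -
  have "mat_adjoint (M * U) * D * (M * U) = mat_adjoint U * (mat_adjoint M * D * M) * U"
    using M D U by (simp add: adjoint_mult' assoc_mult_mat')
  moreover have "Dm = mat_adjoint (embed_first n m) * D * embed_first n m"
    "Dm' = mat_adjoint (embed_rest n m) * D * embed_rest n m"
    using split_block_embed[OF D(1) mn mn] Dm Dm' by simp_all
  ultimately show ?thesis using delta_bounds[OF D] by auto
qed

end

lemma graph_complement_polar_coordinates:
  assumes mn: "m \<le> n" and G: "G \<in> carrier_mat (n - m) m" "spec_norm G \<le> \<epsilon>" "\<epsilon> < 1"
    and Z: "Z \<in> carrier_mat n q"
    and KZ: "mat_adjoint (stack_mat n m (1\<^sub>m m) G) * Z = 0\<^sub>m m q" and ZZ: "mat_adjoint Z * Z = 1\<^sub>m q"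
  obtains S H R where "S \<in> carrier_mat m q" "spec_norm S \<le> \<epsilon>"
    "H \<in> carrier_mat (n - m) q" "mat_adjoint H * H = 1\<^sub>m q"
    "R \<in> carrier_mat q q" "mat_adjoint R = R" "spec_norm (R - 1\<^sub>m q) \<le> \<epsilon>\<^sup>2" "spec_norm R \<le> 1"
    "Z = stack_mat n m S (H * R)"
proof -
  define S where "S = mat_adjoint (embed_first n m) * Z"
  define T where "T = mat_adjoint (embed_rest n m) * Z"
  have S: "S \<in> carrier_mat m q" and T: "T \<in> carrier_mat (n - m) q" unfolding S_def T_def using Z by auto
  note ST = stack_graph_orthonormal_complement[OF mn G(1) Z KZ ZZ, folded S_def T_def]
  have "spec_norm S \<le> \<epsilon> * 1"
    using spec_norm_uminus_le[OF mult_carrier_mat[OF adjoint_carrier_mat[OF G(1)] T]]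
      spec_norm_mult_le'[OF adjoint_carrier_mat[OF G(1)] T _ spec_norm_le_1_of_gram_sum[OF S T ST(2)]]
      spec_norm_adjoint_le[OF G(1)] G(2) ST(1) by force
  hence S_norm: "spec_norm S \<le> \<epsilon>" by simp
  obtain H R where H: "H \<in> carrier_mat (n - m) q" "mat_adjoint H * H = 1\<^sub>m q"
    and R: "R \<in> carrier_mat q q" "mat_adjoint R = R" "spec_norm (R - 1\<^sub>m q) \<le> \<epsilon>\<^sup>2" "spec_norm R \<le> 1"
    and THR: "T = H * R"
    by (rule polar_decomposition_near_isometry[OF S T ST(2) S_norm G(3)])
  have "Z = stack_mat n m S (H * R)"
    unfolding S_def T_def THR[symmetric] by (rule stack_mat_decomposition[OF mn Z])
  with S S_norm H R show ?thesis by (rule that)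
qed

lemma perturbed_coordinates_of_B_orthonormal:
  assumes X: "X \<in> carrier_mat n n" and B: "B \<in> carrier_mat n n" "mat_adjoint B = B"
    and XBX: "mat_adjoint X * B * X = 1\<^sub>m n" and mn: "m \<le> n" and mp: "m \<le> p"
    and G: "G \<in> carrier_mat (n - m) m" "spec_norm G \<le> \<epsilon>" "\<epsilon> < 1"
    and V: "V \<in> carrier_mat n (p - m)" and U: "U \<in> carrier_mat p p" "unitary_mat U"
    and Q: "Q = hcat ((cols_first X m + cols_rest X m * G) * inv_sqrt_mat (1\<^sub>m m + mat_adjoint G * G)) V * U"
    and QBQ: "mat_adjoint Q * B * Q = 1\<^sub>m p"
  obtains S H R M where "perturbed_coordinates n m p \<epsilon> G (inv_sqrt_mat (1\<^sub>m m + mat_adjoint G * G)) S H R M"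
    "mat_adjoint X * B * Q = M * U" "mat_adjoint Q * B * X = mat_adjoint (M * U)"
    "V = cols_first X m * S + cols_rest X m * H * R"
proof -
  define K where "K = stack_mat n m (1\<^sub>m m) G"
  define L where "L = inv_sqrt_mat (1\<^sub>m m + mat_adjoint G * G)"
  have K: "K \<in> carrier_mat n m" unfolding K_def by (rule stack_mat_carrier[OF mn one_carrier_mat G(1)])
  note L = inv_sqrt_one_plus_gram[OF G(1,2), folded L_def]
  obtain L' where L': "L' \<in> carrier_mat m m" "L' * L = 1\<^sub>m m" using L(5) by blast
  have Q_coords: "Q = hcat (X * K * L) V * U"
    unfolding Q cols_first_add_cols_rest_mult[OF mn X G(1)] K_def L_def ..
  have P: "hcat (X * K * L) V \<in> carrier_mat n p" using hcat_carrier[OF _ V mp] X K L(1) by auto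
  have PBP: "mat_adjoint (hcat (X * K * L) V) * B * hcat (X * K * L) V = 1\<^sub>m p"
    by (rule unitary_congruence_eq_one[OF P B(1) U]) (use QBQ Q_coords in simp)
  define M where "M = mat_adjoint X * B * hcat (X * K * L) V"
  define Z where "Z = mat_adjoint X * B * V"
  note coords = hcat_B_orthonormal_coordinates[OF X B(1) XBX K L(1,2) L' V mp PBP, folded M_def Z_def]
  have Z: "Z \<in> carrier_mat n (p - m)" unfolding Z_def using X B V by auto
  obtain S H R where S: "S \<in> carrier_mat m (p - m)" "spec_norm S \<le> \<epsilon>"
    and H: "H \<in> carrier_mat (n - m) (p - m)" "mat_adjoint H * H = 1\<^sub>m (p - m)"
    and R: "R \<in> carrier_mat (p - m) (p - m)" "mat_adjoint R = R" "spec_norm (R - 1\<^sub>m (p - m)) \<le> \<epsilon>\<^sup>2"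
      "spec_norm R \<le> 1" and Zs: "Z = stack_mat n m S (H * R)"
    by (rule graph_complement_polar_coordinates[OF mn G Z coords(5)[unfolded K_def] coords(6)])
  have XBQ: "mat_adjoint X * B * Q = M * U"
    unfolding Q_coords M_def using X B P U by (simp add: assoc_mult_mat')
  show ?thesis
  proof (rule that[folded L_def, OF _ XBQ])
    show "perturbed_coordinates n m p \<epsilon> G L S H R M"
      by unfold_locales (use mn mp G L S H R coords(1-3) Zs
          stack_mat_mult[OF mn one_carrier_mat G(1) L(1)] in \<open>simp_all add: K_def\<close>)
    have "dim_row Q = n" unfolding Q_coords using P by simp
    thus "mat_adjoint Q * B * X = mat_adjoint (M * U)"
      using XBQ[symmetric] X B by (simp add: adjoint_mult' assoc_mult_mat')
    show "V = cols_first X m * S + cols_rest X m * H * R"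
      using coords(4) Zs mult_stack_mat[OF X mn S(1) mult_carrier_mat[OF H(1) R(1)]] H R X
      by (simp add: assoc_mult_mat' cols_rest_def)
  qed
qed

theorem lemma3:
  fixes n m p :: nat and A B C X \<Lambda> G V U :: "complex mat" and \<epsilon> :: real
  assumes A: "A \<in> carrier_mat n n" "hermitian_mat A"
    and B: "B \<in> carrier_mat n n" "hermitian_mat B" "pos_def_mat B"
    and C: "C \<in> carrier_mat n n" "invertible_mat C" "B = mat_adjoint C * C"
    and X: "X \<in> carrier_mat n n" "mat_adjoint X * B * X = 1\<^sub>m n"
    and Lam: "\<Lambda> \<in> carrier_mat n n" "diagonal_mat \<Lambda>" "\<forall>i<n. \<Lambda> $$ (i,i) \<in> \<real>"
    and eig: "A * X = B * X * \<Lambda>"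
    and mp: "m \<le> p" "p < n"
    and G: "G \<in> carrier_mat (n - m) m" "spec_norm G = \<epsilon>" "\<epsilon> \<le> 1/2"
    and V: "V \<in> carrier_mat n (p - m)"
    and U: "U \<in> carrier_mat p p" "unitary_mat U"
    and Q: "Q = hcat ((cols_first X m + cols_rest X m * G) *
                       inv_sqrt_mat (mat_adjoint (cols_first X m + cols_rest X m * G) * B *
                                     (cols_first X m + cols_rest X m * G))) V * U"
    and QBQ: "mat_adjoint Q * B * Q = 1\<^sub>m p"
  shows
    "let Xm = cols_first X m; Xm' = cols_rest X m;
         Linv = inv_sqrt_mat (mat_adjoint (Xm + Xm' * G) * B * (Xm + Xm' * G))
     in spec_norm (Linv - 1\<^sub>m m) \<le> \<epsilon>\<^sup>2 \<and>
        (\<exists>S H R.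
           S \<in> carrier_mat m (p - m) \<and> spec_norm S \<le> \<epsilon> \<and>
           H \<in> carrier_mat (n - m) (p - m) \<and> mat_adjoint H * H = 1\<^sub>m (p - m) \<and>
           R \<in> carrier_mat (p - m) (p - m) \<and> spec_norm (R - 1\<^sub>m (p - m)) \<le> \<epsilon>\<^sup>2 \<and>
           V = Xm * S + Xm' * H * R \<and>
           \<comment> \<open>(2)\<close>
           (\<exists>\<Theta> \<in> carrier_mat n p.
              mat_adjoint X * B * Q =
                (four_block_mat (1\<^sub>m m) (0\<^sub>m m (p - m)) (0\<^sub>m (n - m) m) H + \<Theta>) * U \<and>
              (case split_block \<Theta> m m of (\<Theta>11, \<Theta>12, \<Theta>21, \<Theta>22) \<Rightarrow>
                 spec_norm \<Theta>11 \<le> \<epsilon>\<^sup>2 \<and> spec_norm \<Theta>22 \<le> \<epsilon>\<^sup>2 \<and>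
                 spec_norm \<Theta>12 \<le> (1 + \<epsilon>\<^sup>2) * \<epsilon> \<and> spec_norm \<Theta>21 \<le> (1 + \<epsilon>\<^sup>2) * \<epsilon>)) \<and>
           \<comment> \<open>(3)\<close>
           (\<forall>D Dm Dm'. D \<in> carrier_mat n n \<longrightarrow> diagonal_mat D \<longrightarrow> (\<forall>i<n. D $$ (i,i) \<in> \<real>) \<longrightarrow>
              Dm = fst (split_block D m m) \<longrightarrow> Dm' = snd (snd (snd (split_block D m m))) \<longrightarrow>
              (\<exists>\<Delta> \<in> carrier_mat p p.
                 mat_adjoint Q * B * X * D * (mat_adjoint X * B * Q) =
                   mat_adjoint U *
                   (four_block_mat Dm (0\<^sub>m m (p - m)) (0\<^sub>m (p - m) m) (mat_adjoint H * Dm' * H) + \<Delta>) * U \<and>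
                 (case split_block \<Delta> m m of (\<Delta>11, \<Delta>12, \<Delta>21, \<Delta>22) \<Rightarrow>
                    \<Delta>21 = mat_adjoint \<Delta>12 \<and>
                    spec_norm \<Delta>11 \<le> 4 * spec_norm D * \<epsilon>\<^sup>2 \<and>
                    spec_norm \<Delta>22 \<le> 4 * spec_norm D * \<epsilon>\<^sup>2 \<and>
                    spec_norm \<Delta>12 \<le> 4 * spec_norm D * \<epsilon>))))"
proof -
  have mn: "m \<le> n" and \<epsilon>: "\<epsilon> < 1" and Bh: "mat_adjoint B = B"
    using mp G(3) B(2) unfolding hermitian_mat_def by auto
  note gram = B_gram_cols_first_add_cols_rest[OF X(1) B(1) X(2) mn G(1)]
  obtain S H R M where coords: "perturbed_coordinates n m p \<epsilon> G (inv_sqrt_mat (1\<^sub>m m + mat_adjoint G * G)) S H R M"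
    and XBQ: "mat_adjoint X * B * Q = M * U" and QBX: "mat_adjoint Q * B * X = mat_adjoint (M * U)"
    and VS: "V = cols_first X m * S + cols_rest X m * H * R"
    by (rule perturbed_coordinates_of_B_orthonormal[OF X(1) B(1) Bh X(2) mn mp(1) G(1) _ \<epsilon> V U _ QBQ])
      (use G(2) Q[unfolded gram] in simp_all)
  interpret perturbed_coordinates n m p \<epsilon> G "inv_sqrt_mat (1\<^sub>m m + mat_adjoint G * G)" S H R M
    by (rule coords)
  show ?thesis
    unfolding Let_def gram
  proof (rule conjI[OF L_norm(2)], rule exI[of _ S], rule exI[of _ H], rule exI[of _ R],
      intro conjI S S_norm H R(1) R_norm(2) VS)
    show "\<exists>\<Theta> \<in> carrier_mat n p. mat_adjoint X * B * Q =
        (four_block_mat (1\<^sub>m m) (0\<^sub>m m (p - m)) (0\<^sub>m (n - m) m) H + \<Theta>) * U \<and>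
        (case split_block \<Theta> m m of (\<Theta>11, \<Theta>12, \<Theta>21, \<Theta>22) \<Rightarrow>
          spec_norm \<Theta>11 \<le> \<epsilon>\<^sup>2 \<and> spec_norm \<Theta>22 \<le> \<epsilon>\<^sup>2 \<and>
          spec_norm \<Theta>12 \<le> (1 + \<epsilon>\<^sup>2) * \<epsilon> \<and> spec_norm \<Theta>21 \<le> (1 + \<epsilon>\<^sup>2) * \<epsilon>)"
      using theta_bounds unfolding XBQ by metis
  qed (use unitary_congruence_delta_bounds U(1) in \<open>simp add: QBX XBQ\<close>)
qed

end
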